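(* Let $d\in\mathbb{N}$, $K=\mathbb{N}_0^d$ or $K=\mathbb{Z}^d$, $(\Omega,\mathcal F,P)$ a probability space with a $d$-parameter semigroup (group if $K=\mathbb{Z}^d$) $(\theta_k)_{k\in K}$ of $P$-preserving transformations, $(M,\mathcal B,\mu)$ a probability space, $\tau$ a $\mu$-preserving transformation of $M$ that is periodic with period $q\in\mathbb{N}$ (i.e. $\tau^q=\mathrm{Id}$), $\kappa:M\to K$ measurable and $\kappa_n=\sum_{i=0}^{n-1}\kappa\circ\tau^i$. Let $F\in L^1(M\times\Omega,\mathcal B\otimes\mathcal F,\mu\otimes P)$ and, for $t\in M$, let $\mathcal J_t$ be the $\sigma$-algebra of $\theta_{\kappa_q(t)}$-invariant sets in $\mathcal F$. Then for $\mu$-almost all $t\in M$, $$\frac1n\sum_{i=0}^{n-1}F\big(\tau^i(t),\theta_{\kappa_i(t)}\omega\big)\to\frac1q\sum_{\nu=0}^{q-1}E\big[F\big(\tau^\nu(t),\theta_{\kappa_\nu(t)}(\cdot)\big)\,\big|\,\mathcal J_t\big](\omega)\quad(n\to\infty)$$ for $P$-almost all $\omega\in\Omega$ and in $L^1(P)$. If moreover $\theta_{\kappa_q(t)}$ is ergodic with respect to $P$ for $\mu$-almost all $t\in M$, then the limit equals the constant $\frac1q\sum_{\nu=0}^{q-1}E\big[F(\tau^\nu(t),\cdot)\big]$.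
   Context: A semigroup of measure-preserving transformations: each $\theta_k$ measurable and $P$-preserving, $\theta_0=\mathrm{Id}$, $\theta_k\circ\theta_l=\theta_{k+l}$ (and $\theta_{-k}=\theta_k^{-1}$ in the group case). $E$ denotes expectation with respect to $P$. *)

theory Defs
  imports "HOL-Probability.Probability"
begin

definition invariant_sets :: "'a measure \<Rightarrow> ('a \<Rightarrow> 'a) \<Rightarrow> 'a set set" where
  "invariant_sets P T = {A \<in> sets P. T -` A \<inter> space P = A}"

text \<open>The sigma-algebra of T-invariant sets (as a measurable space on space P;
  only its sets matter for conditional expectation).\<close>
definition invariant_sigma :: "'a measure \<Rightarrow> ('a \<Rightarrow> 'a) \<Rightarrow> 'a measure" where
  "invariant_sigma P T = sigma (space P) (invariant_sets P T)"

definition ergodic :: "'a measure \<Rightarrow> ('a \<Rightarrow> 'a) \<Rightarrow> bool" where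
  "ergodic P T \<longleftrightarrow> (\<forall>A \<in> invariant_sets P T. measure P A = 0 \<or> measure P A = 1)"

definition meas_preserving :: "'a measure \<Rightarrow> ('a \<Rightarrow> 'a) \<Rightarrow> bool" where
  "meas_preserving P T \<longleftrightarrow> T \<in> P \<rightarrow>\<^sub>M P \<and> distr P P T = P"

end

theory Submission
  imports Defs
begin

text \<open>Fix \<open>t\<close> with \<open>(\<tau> ^^ q) t = t\<close> and put \<open>T = \<theta> (\<kappa>s q t)\<close> and
  \<open>f\<^sub>\<nu> = F ((\<tau> ^^ \<nu>) t, \<theta> (\<kappa>s \<nu> t) \<cdot>)\<close>. Since \<open>\<kappa>s (q j + \<nu>) t = \<kappa>s \<nu> t + j \<kappa>s q t\<close>,
  the summand with index \<open>q j + \<nu>\<close> is \<open>f\<^sub>\<nu> (T\<^sup>j \<omega>)\<close>: every complete round of \<open>q\<close> summands is one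
  term of the Birkhoff sum of \<open>g = \<Sum>\<^sub>\<nu> f\<^sub>\<nu>\<close> under \<open>T\<close>, and the incomplete last round is \<open>o(n)\<close>.
  Birkhoff's ergodic theorem for the single map \<open>T\<close>, proved from Hopf's maximal ergodic theorem,
  gives convergence almost everywhere and in \<open>L\<^sup>1\<close> to \<open>E[g | \<J>\<^sub>t] / q\<close>, and
  \<open>E[g | \<J>\<^sub>t] = \<Sum>\<^sub>\<nu> E[f\<^sub>\<nu> | \<J>\<^sub>t]\<close>. By Fubini the sections \<open>F ((\<tau> ^^ \<nu>) t, \<cdot>)\<close> are integrable for
  \<open>\<mu>\<close>-almost every \<open>t\<close>; under ergodicity \<open>E[f\<^sub>\<nu> | \<J>\<^sub>t]\<close> is the constant \<open>E f\<^sub>\<nu>\<close>, which equals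
  \<open>E F ((\<tau> ^^ \<nu>) t, \<cdot>)\<close> because \<open>\<theta> (\<kappa>s \<nu> t)\<close> preserves \<open>P\<close>.\<close>

section \<open>Birkhoff sums\<close>

definition birkhoff_sum :: "('a \<Rightarrow> 'a) \<Rightarrow> ('a \<Rightarrow> 'b::comm_monoid_add) \<Rightarrow> nat \<Rightarrow> 'a \<Rightarrow> 'b" where
  "birkhoff_sum T f n x = (\<Sum>i<n. f ((T ^^ i) x))"

definition birkhoff_avg :: "('a \<Rightarrow> 'a) \<Rightarrow> ('a \<Rightarrow> real) \<Rightarrow> nat \<Rightarrow> 'a \<Rightarrow> real" where
  "birkhoff_avg T f n x = birkhoff_sum T f n x / real n"

fun birkhoff_max :: "('a \<Rightarrow> 'a) \<Rightarrow> ('a \<Rightarrow> real) \<Rightarrow> nat \<Rightarrow> 'a \<Rightarrow> real" where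
  "birkhoff_max T f 0 x = 0"
| "birkhoff_max T f (Suc n) x = max (birkhoff_max T f n x) (birkhoff_sum T f (Suc n) x)"

lemma birkhoff_sum_0 [simp]: "birkhoff_sum T f 0 x = 0"
  by (simp add: birkhoff_sum_def)

lemma birkhoff_sum_Suc_shift: "birkhoff_sum T f (Suc n) x = f x + birkhoff_sum T f n (T x)"
  unfolding birkhoff_sum_def sum.lessThan_Suc_shift by (simp add: funpow_Suc_right del: funpow.simps)

lemma birkhoff_sum_eq_mult_avg: "birkhoff_sum T f n x = real n * birkhoff_avg T f n x"
  by (cases "n = 0") (simp_all add: birkhoff_avg_def)

lemma birkhoff_sum_uminus: "birkhoff_sum T (\<lambda>x. - f x) n x = - birkhoff_sum T f n x"
  for f :: "'a \<Rightarrow> 'b::ab_group_add"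
  by (simp add: birkhoff_sum_def sum_negf)

lemma birkhoff_avg_uminus: "birkhoff_avg T (\<lambda>x. - f x) n x = - birkhoff_avg T f n x"
  by (simp add: birkhoff_avg_def birkhoff_sum_uminus)

lemma birkhoff_sum_minus_const: "birkhoff_sum T (\<lambda>x. f x - c) n x = birkhoff_sum T f n x - real n * c"
  by (simp add: birkhoff_sum_def sum_subtractf)

lemma birkhoff_avg_diff: "birkhoff_avg T (\<lambda>x. f x - g x) n x = birkhoff_avg T f n x - birkhoff_avg T g n x"
  by (simp add: birkhoff_avg_def birkhoff_sum_def sum_subtractf diff_divide_distrib)

lemma abs_birkhoff_avg_le: "\<bar>birkhoff_avg T f n x\<bar> \<le> birkhoff_avg T (\<lambda>x. \<bar>f x\<bar>) n x"
  unfolding birkhoff_avg_def birkhoff_sum_def by (simp add: divide_right_mono sum_abs abs_divide)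

lemma abs_birkhoff_avg_bounded:
  assumes "\<And>x. \<bar>f x\<bar> \<le> C" "0 \<le> C"
  shows "\<bar>birkhoff_avg T f n x\<bar> \<le> C"
proof -
  have "\<bar>birkhoff_sum T f n x\<bar> \<le> real n * C"
    unfolding birkhoff_sum_def
    using order_trans[OF sum_abs sum_mono[of "{..<n}" "\<lambda>i. \<bar>f ((T ^^ i) x)\<bar>" "\<lambda>_. C"]] assms(1)
    by simp
  then show ?thesis
    unfolding birkhoff_avg_def using assms(2) by (cases "n = 0") (auto simp: abs_divide field_simps)
qed

lemma birkhoff_avg_Suc:
  "birkhoff_avg T f (Suc n) x = (real n / real (Suc n)) * birkhoff_avg T f n (T x) + f x / real (Suc n)"
proof -
  have "(real n / real (Suc n)) * (birkhoff_sum T f n (T x) / real n) = birkhoff_sum T f n (T x) / real (Suc n)"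
    by (cases "n = 0") (simp_all del: of_nat_Suc)
  then show ?thesis
    unfolding birkhoff_avg_def by (simp add: birkhoff_sum_Suc_shift add_divide_distrib)
qed

lemma birkhoff_avg_T:
  "birkhoff_avg T f n (T x) = (real (Suc n) / real n) * birkhoff_avg T f (Suc n) x - f x / real n"
proof (cases "n = 0")
  case False
  have "(real (Suc n) / real n) * (birkhoff_sum T f (Suc n) x / real (Suc n))
      = birkhoff_sum T f (Suc n) x / real n"
    by (simp del: of_nat_Suc)
  then show ?thesis
    unfolding birkhoff_avg_def by (simp add: birkhoff_sum_Suc_shift add_divide_distrib)
qed (simp add: birkhoff_avg_def)

lemma birkhoff_max_nonneg: "0 \<le> birkhoff_max T f n x"
  by (induction n) auto

lemma birkhoff_sum_le_max: "k \<le> n \<Longrightarrow> birkhoff_sum T f k x \<le> birkhoff_max T f n x"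
  by (induction n) (auto simp: le_Suc_eq)

lemma birkhoff_max_cases:
  "birkhoff_max T f n x = 0 \<or> (\<exists>k\<in>{1..n}. birkhoff_max T f n x = birkhoff_sum T f k x)"
  by (induction n) (auto simp: max_def)

lemma birkhoff_max_le_sum_abs: "birkhoff_max T f n x \<le> (\<Sum>i<n. \<bar>f ((T ^^ i) x)\<bar>)"
proof -
  have "birkhoff_sum T f k x \<le> (\<Sum>i<n. \<bar>f ((T ^^ i) x)\<bar>)" if "k \<le> n" for k
  proof -
    have "birkhoff_sum T f k x \<le> (\<Sum>i<k. \<bar>f ((T ^^ i) x)\<bar>)"
      unfolding birkhoff_sum_def by (intro sum_mono) auto
    also have "\<dots> \<le> (\<Sum>i<n. \<bar>f ((T ^^ i) x)\<bar>)"
      using that by (intro sum_mono2) auto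
    finally show ?thesis .
  qed
  then show ?thesis
    using birkhoff_max_cases[of T f n x] by (auto intro: sum_nonneg)
qed

text \<open>The pointwise inequality behind the maximal ergodic theorem: where the maximum is positive it
  is attained by a sum of length at least one, which splits as \<open>f x\<close> plus a shorter sum at \<open>T x\<close>.\<close>
lemma birkhoff_max_diff_le:
  "birkhoff_max T f n x - birkhoff_max T f n (T x) \<le> (if 0 < birkhoff_max T f n x then f x else 0)"
proof (cases "0 < birkhoff_max T f n x")
  case True
  then obtain k where k: "Suc k \<le> n" "birkhoff_max T f n x = birkhoff_sum T f (Suc k) x"
    using birkhoff_max_cases[of T f n x] by (auto simp: Suc_le_eq gr0_conv_Suc)
  have "birkhoff_sum T f (Suc k) x \<le> f x + birkhoff_max T f n (T x)"
    unfolding birkhoff_sum_Suc_shift using k(1) birkhoff_sum_le_max[of k n] by simp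
  then show ?thesis using True k(2) by simp
qed (use birkhoff_max_nonneg[of T f n x] birkhoff_max_nonneg[of T f n "T x"] in auto)

section \<open>The maximal ergodic theorem\<close>

locale mpt = prob_space P for P :: "'a measure" +
  fixes T :: "'a \<Rightarrow> 'a"
  assumes measure_preserving: "meas_preserving P T"
begin

lemma T_measurable [measurable]: "T \<in> P \<rightarrow>\<^sub>M P"
  using measure_preserving by (simp add: meas_preserving_def)

lemma distr_T: "distr P P T = P"
  using measure_preserving by (simp add: meas_preserving_def)

lemma Tn_measurable [measurable]: "(T ^^ n) \<in> P \<rightarrow>\<^sub>M P"
  by (induction n) (auto simp: measurable_ident)

lemma distr_Tn: "distr P P (T ^^ n) = P"
proof (induction n)
  case 0
  then show ?case by (simp add: distr_id2 sets.sets_into_space)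
next
  case (Suc n)
  have "distr P P (T ^^ Suc n) = distr (distr P P (T ^^ n)) P T"
    by (simp add: distr_distr comp_def)
  then show ?case by (simp only: Suc distr_T)
qed

lemma
  fixes f :: "'a \<Rightarrow> real"
  assumes "integrable P f"
  shows integrable_comp_Tn: "integrable P (\<lambda>x. f ((T ^^ n) x))"
    and integral_comp_Tn: "(\<integral>x. f ((T ^^ n) x) \<partial>P) = (\<integral>x. f x \<partial>P)"
proof -
  have [measurable]: "f \<in> borel_measurable P" using assms by auto
  show "integrable P (\<lambda>x. f ((T ^^ n) x))"
    using assms distr_Tn integrable_distr_eq[of "T ^^ n" P P f] by simp
  show "(\<integral>x. f ((T ^^ n) x) \<partial>P) = (\<integral>x. f x \<partial>P)"
    using integral_distr[of "T ^^ n" P P f] distr_Tn by simp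
qed

lemma
  fixes f :: "'a \<Rightarrow> real"
  assumes "integrable P f"
  shows integrable_comp_T: "integrable P (\<lambda>x. f (T x))"
    and integral_comp_T: "(\<integral>x. f (T x) \<partial>P) = (\<integral>x. f x \<partial>P)"
  using integrable_comp_Tn[OF assms, of 1] integral_comp_Tn[OF assms, of 1] by simp_all

lemma AE_comp_Tn:
  assumes "AE x in P. Q x"
  shows "AE x in P. Q ((T ^^ n) x)"
proof -
  obtain N where N: "{x \<in> space P. \<not> Q x} \<subseteq> N" "emeasure P N = 0" "N \<in> sets P"
    using assms by (rule AE_E)
  show ?thesis
  proof (rule AE_I)
    show "{x \<in> space P. \<not> Q ((T ^^ n) x)} \<subseteq> (T ^^ n) -` N \<inter> space P"
      using N(1) measurable_space[OF Tn_measurable] by auto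
    show "emeasure P ((T ^^ n) -` N \<inter> space P) = 0"
      using emeasure_distr[OF Tn_measurable N(3)] N(2) distr_Tn by simp
  qed (use N(3) in simp)
qed

lemma birkhoff_sum_measurable [measurable]:
  fixes f :: "'a \<Rightarrow> real"
  assumes [measurable]: "f \<in> borel_measurable P"
  shows "birkhoff_sum T f n \<in> borel_measurable P"
  unfolding birkhoff_sum_def by measurable

lemma birkhoff_avg_measurable [measurable]:
  assumes [measurable]: "f \<in> borel_measurable P"
  shows "birkhoff_avg T f n \<in> borel_measurable P"
  unfolding birkhoff_avg_def by measurable

lemma birkhoff_max_measurable [measurable]:
  assumes [measurable]: "f \<in> borel_measurable P"
  shows "birkhoff_max T f n \<in> borel_measurable P"
  by (induction n) auto

lemma integrable_birkhoff_sum: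
  fixes f :: "'a \<Rightarrow> real"
  shows "integrable P f \<Longrightarrow> integrable P (birkhoff_sum T f n)"
  unfolding birkhoff_sum_def by (auto intro!: Bochner_Integration.integrable_sum integrable_comp_Tn)

lemma integrable_birkhoff_avg: "integrable P f \<Longrightarrow> integrable P (birkhoff_avg T f n)"
  unfolding birkhoff_avg_def by (intro integrable_divide integrable_birkhoff_sum)

lemma integral_birkhoff_avg:
  "integrable P f \<Longrightarrow> n \<ge> 1 \<Longrightarrow> (\<integral>x. birkhoff_avg T f n x \<partial>P) = (\<integral>x. f x \<partial>P)"
  unfolding birkhoff_avg_def birkhoff_sum_def
  by (simp add: Bochner_Integration.integral_sum integrable_comp_Tn integral_comp_Tn)

lemma integral_abs_birkhoff_avg_le:
  assumes "integrable P f"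
  shows "(\<integral>x. \<bar>birkhoff_avg T f n x\<bar> \<partial>P) \<le> (\<integral>x. \<bar>f x\<bar> \<partial>P)"
proof (cases "n = 0")
  case False
  have "(\<integral>x. \<bar>birkhoff_avg T f n x\<bar> \<partial>P) \<le> (\<integral>x. birkhoff_avg T (\<lambda>x. \<bar>f x\<bar>) n x \<partial>P)"
    using assms by (intro integral_mono integrable_abs integrable_birkhoff_avg abs_birkhoff_avg_le)
  also have "\<dots> = (\<integral>x. \<bar>f x\<bar> \<partial>P)"
    using False assms by (intro integral_birkhoff_avg integrable_abs) auto
  finally show ?thesis .
qed (simp add: birkhoff_avg_def)

lemma maximal_ergodic_finite:
  assumes f: "integrable P f"
  shows "0 \<le> (\<integral>x. (if 0 < birkhoff_max T f n x then f x else 0) \<partial>P)"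
proof -
  have [measurable]: "f \<in> borel_measurable P" using f by auto
  have "integrable P (\<lambda>x. \<Sum>i<n. \<bar>f ((T ^^ i) x)\<bar>)"
    by (auto intro!: Bochner_Integration.integrable_sum integrable_abs integrable_comp_Tn f)
  then have M: "integrable P (birkhoff_max T f n)"
    by (rule Bochner_Integration.integrable_bound)
       (auto simp: birkhoff_max_nonneg birkhoff_max_le_sum_abs intro!: order_trans[OF _ abs_ge_self])
  have I: "integrable P (\<lambda>x. if 0 < birkhoff_max T f n x then f x else 0)"
    by (rule Bochner_Integration.integrable_bound[OF integrable_abs[OF f]]) auto
  have "0 = (\<integral>x. birkhoff_max T f n x \<partial>P) - (\<integral>x. birkhoff_max T f n (T x) \<partial>P)"
    using integral_comp_T[OF M] by simp
  also have "\<dots> = (\<integral>x. birkhoff_max T f n x - birkhoff_max T f n (T x) \<partial>P)"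
    using M integrable_comp_T[OF M] by simp
  also have "\<dots> \<le> (\<integral>x. (if 0 < birkhoff_max T f n x then f x else 0) \<partial>P)"
    by (intro integral_mono I Bochner_Integration.integrable_diff M integrable_comp_T[OF M]
        birkhoff_max_diff_le)
  finally show ?thesis .
qed

lemma maximal_ergodic:
  fixes f :: "'a \<Rightarrow> real"
  assumes f: "integrable P f"
  shows "0 \<le> (\<integral>x. (if \<exists>k\<ge>1. 0 < birkhoff_sum T f k x then f x else 0) \<partial>P)"
proof -
  have [measurable]: "f \<in> borel_measurable P" using f by auto
  have "\<forall>\<^sub>F n in sequentially. (if 0 < birkhoff_max T f n x then f x else 0)
          = (if \<exists>k\<ge>1. 0 < birkhoff_sum T f k x then f x else 0)" for x
  proof (cases "\<exists>k\<ge>1. 0 < birkhoff_sum T f k x")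
    case True
    then obtain k where "0 < birkhoff_sum T f k x" by auto
    then have "\<forall>n\<ge>k. 0 < birkhoff_max T f n x"
      using birkhoff_sum_le_max[of k _ T f x] by fastforce
    then show ?thesis using True by (auto simp: eventually_sequentially)
  next
    case False
    then have "\<not> 0 < birkhoff_max T f n x" for n
      using birkhoff_max_cases[of T f n x] by auto
    then show ?thesis using False by auto
  qed
  then have "AE x in P. (\<lambda>n. if 0 < birkhoff_max T f n x then f x else 0)
      \<longlonglongrightarrow> (if \<exists>k\<ge>1. 0 < birkhoff_sum T f k x then f x else 0)"
    by (intro AE_I2 tendsto_eventually)
  then have "(\<lambda>n. \<integral>x. (if 0 < birkhoff_max T f n x then f x else 0) \<partial>P)
      \<longlonglongrightarrow> (\<integral>x. (if \<exists>k\<ge>1. 0 < birkhoff_sum T f k x then f x else 0) \<partial>P)"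
    by (rule integral_dominated_convergence[where w="\<lambda>x. \<bar>f x\<bar>", rotated 3]) (use f in auto)
  then show ?thesis
    by (rule LIMSEQ_le_const) (use maximal_ergodic_finite[OF f] in auto)
qed

lemma maximal_ergodic_invariant:
  fixes f :: "'a \<Rightarrow> real"
  assumes f: "integrable P f" and B: "B \<in> sets P" and inv: "\<And>x. x \<in> B \<Longrightarrow> T x \<in> B"
    and pos: "\<And>x. x \<in> B \<Longrightarrow> \<exists>k\<ge>1. 0 < birkhoff_sum T f k x"
  shows "0 \<le> (\<integral>x. indicator B x * f x \<partial>P)"
proof -
  define g where "g x = indicator B x * f x" for x
  have "birkhoff_sum T g k x = birkhoff_sum T f k x" if "x \<in> B" for k x
  proof -
    have "(T ^^ i) x \<in> B" for i using that inv by (induction i) auto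
    then show ?thesis unfolding birkhoff_sum_def g_def by (intro sum.cong) auto
  qed
  then have "(if \<exists>k\<ge>1. 0 < birkhoff_sum T g k x then g x else 0) = g x" for x
    using pos[of x] by (cases "x \<in> B") (auto simp: g_def)
  moreover have "integrable P g"
    unfolding g_def using integrable_mult_indicator[OF B f] by simp
  ultimately have "0 \<le> (\<integral>x. g x \<partial>P)"
    using maximal_ergodic[of g] by presburger
  then show ?thesis by (simp add: g_def)
qed

lemma integral_invariant_ge:
  assumes f: "integrable P f" and B: "B \<in> sets P" and inv: "\<And>x. x \<in> B \<Longrightarrow> T x \<in> B"
    and pos: "\<And>x. x \<in> B \<Longrightarrow> \<exists>k\<ge>1. real k * c < birkhoff_sum T f k x"
  shows "c * measure P B \<le> (\<integral>x. indicator B x * f x \<partial>P)"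
proof -
  have "0 \<le> (\<integral>x. indicator B x * (f x - c) \<partial>P)"
    by (rule maximal_ergodic_invariant[OF _ B inv]) (use f pos in \<open>auto simp: birkhoff_sum_minus_const\<close>)
  also have "\<dots> = (\<integral>x. indicator B x * f x \<partial>P) - (\<integral>x. c * indicator B x \<partial>P)"
    using integrable_mult_indicator[OF B f] integrable_real_indicator[OF B] B
    by (simp add: right_diff_distrib mult.commute[of _ c] emeasure_finite less_top[symmetric])
  also have "(\<integral>x. c * indicator B x \<partial>P) = c * measure P B"
    using B by simp
  finally show ?thesis by simp
qed

lemma integral_invariant_le:
  assumes f: "integrable P f" and B: "B \<in> sets P" and inv: "\<And>x. x \<in> B \<Longrightarrow> T x \<in> B"
    and neg: "\<And>x. x \<in> B \<Longrightarrow> \<exists>k\<ge>1. birkhoff_sum T f k x < real k * c"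
  shows "(\<integral>x. indicator B x * f x \<partial>P) \<le> c * measure P B"
proof -
  have "(- c) * measure P B \<le> (\<integral>x. indicator B x * (- f x) \<partial>P)"
    by (rule integral_invariant_ge[OF _ B inv]) (use f neg in \<open>auto simp: birkhoff_sum_uminus\<close>)
  then show ?thesis by simp
qed

end

section \<open>Almost everywhere convergence of Birkhoff averages\<close>

text \<open>\<open>limsup_above X b\<close> says \<open>ereal b < limsup X\<close>; the quantifier over \<open>j\<close> keeps it a countable
  combination of measurable events.\<close>
definition limsup_above :: "(nat \<Rightarrow> real) \<Rightarrow> real \<Rightarrow> bool" where
  "limsup_above X b \<longleftrightarrow> (\<exists>j::nat. \<forall>N. \<exists>n\<ge>N. b + 1 / real (Suc j) < X n)"

definition oscillates :: "(nat \<Rightarrow> real) \<Rightarrow> bool" where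
  "oscillates X \<longleftrightarrow>
     (\<exists>a b::rat. a < b \<and> limsup_above (\<lambda>n. - X n) (- of_rat a) \<and> limsup_above X (of_rat b))"

lemma eventually_le_if_not_limsup_above:
  assumes "\<not> limsup_above X b"
  shows "\<forall>\<^sub>F n in sequentially. X n \<le> b + 1"
  using assms unfolding limsup_above_def eventually_sequentially
  by (metis One_nat_def div_by_1 not_less of_nat_1)

lemma limsup_above_if_frequently_ge:
  assumes "\<forall>N. \<exists>n\<ge>N. c \<le> X n" and "b < c"
  shows "limsup_above X b"
proof -
  obtain j where "inverse (real (Suc j)) < c - b"
    using reals_Archimedean[of "c - b"] assms(2) by auto
  then have "b + 1 / real (Suc j) < c" by (simp add: field_simps)
  then show ?thesis
    unfolding limsup_above_def using assms(1) by (meson less_le_trans)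
qed

lemma oscillates_if_frequently_above_subseq_limit:
  fixes X :: "nat \<Rightarrow> real"
  assumes r: "strict_mono r" "(X \<circ> r) \<longlonglongrightarrow> l" and e: "0 < \<epsilon>"
    and freq: "\<forall>N. \<exists>n\<ge>N. l + \<epsilon> \<le> X n"
  shows "oscillates X"
proof -
  obtain a' b' where a': "a' \<in> \<rat>" "l + \<epsilon> / 3 < a'" "a' < l + 2 * \<epsilon> / 3"
    and b': "b' \<in> \<rat>" "l + 2 * \<epsilon> / 3 < b'" "b' < l + \<epsilon>"
    using e Rats_dense_in_real[of "l + \<epsilon> / 3" "l + 2 * \<epsilon> / 3"]
      Rats_dense_in_real[of "l + 2 * \<epsilon> / 3" "l + \<epsilon>"] by auto
  obtain a b :: rat where "a' = of_rat a" "b' = of_rat b"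
    using a'(1) b'(1) Rats_cases by metis
  then have ab: "l + \<epsilon> / 3 < of_rat a" "of_rat a < (of_rat b :: real)" "of_rat b < l + \<epsilon>"
    using a' b' by auto
  have "\<forall>N. \<exists>n\<ge>N. - l - \<epsilon> / 3 \<le> - X n"
  proof
    fix N
    obtain K where K: "\<And>k. k \<ge> K \<Longrightarrow> dist (X (r k)) l < \<epsilon> / 3"
      using tendstoD[OF r(2), of "\<epsilon> / 3"] e by (auto simp: eventually_sequentially)
    have "r (max N K) \<ge> N" using seq_suble[OF r(1), of "max N K"] by simp
    moreover have "X (r (max N K)) \<le> l + \<epsilon> / 3"
      using K[of "max N K"] unfolding dist_real_def by linarith
    ultimately show "\<exists>n\<ge>N. - l - \<epsilon> / 3 \<le> - X n" by force
  qed
  then have "limsup_above (\<lambda>n. - X n) (- of_rat a)"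
    by (rule limsup_above_if_frequently_ge) (use ab in simp)
  moreover have "limsup_above X (of_rat b)"
    using freq ab(3) by (rule limsup_above_if_frequently_ge)
  ultimately show ?thesis
    unfolding oscillates_def using ab(2) of_rat_less by blast
qed

lemma oscillates_uminus: "oscillates (\<lambda>n. - X n) \<Longrightarrow> oscillates X"
  unfolding oscillates_def
proof (elim exE conjE)
  fix a b :: rat
  assume "a < b" "limsup_above (\<lambda>n. - (- X n)) (- of_rat a)" "limsup_above (\<lambda>n. - X n) (of_rat b)"
  then show "\<exists>a b::rat. a < b \<and> limsup_above (\<lambda>n. - X n) (- of_rat a) \<and> limsup_above X (of_rat b)"
    by (intro exI[of _ "- b"] exI[of _ "- a"]) (simp add: of_rat_minus)
qed

lemma convergent_if_not_oscillates:
  fixes X :: "nat \<Rightarrow> real"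
  assumes above: "\<not> limsup_above X b" and below: "\<not> limsup_above (\<lambda>n. - X n) c"
    and osc: "\<not> oscillates X"
  shows "convergent X"
proof -
  have "\<forall>\<^sub>F n in sequentially. norm (X n) \<le> norm (\<bar>b\<bar> + \<bar>c\<bar> + 1)"
    using eventually_le_if_not_limsup_above[OF above] eventually_le_if_not_limsup_above[OF below]
    by eventually_elim auto
  then have "Bseq X"
    by (rule Bseq_eventually_mono) simp
  then have "bounded (range X)"
    by (simp add: Bseq_eq_bounded)
  then obtain l r where r: "strict_mono r" "(X \<circ> r) \<longlonglongrightarrow> l"
    using bounded_imp_convergent_subsequence by blast
  have "X \<longlonglongrightarrow> l"
  proof (rule ccontr)
    assume "\<not> X \<longlonglongrightarrow> l"
    then obtain \<epsilon> where e: "0 < \<epsilon>" "\<exists>\<^sub>F n in sequentially. \<not> dist (X n) l < \<epsilon>"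
      unfolding tendsto_iff by (auto simp: not_eventually)
    have "\<exists>\<^sub>F n in sequentially. l + \<epsilon> \<le> X n \<or> - l + \<epsilon> \<le> - X n"
      using e(2) by (rule frequently_elim1) (auto simp: dist_real_def)
    then have "(\<exists>\<^sub>F n in sequentially. l + \<epsilon> \<le> X n) \<or> (\<exists>\<^sub>F n in sequentially. - l + \<epsilon> \<le> - X n)"
      by (simp only: frequently_disj_iff)
    moreover have "((\<lambda>n. - X n) \<circ> r) \<longlonglongrightarrow> - l"
      using tendsto_minus[OF r(2)] by (simp add: comp_def)
    ultimately have "oscillates X \<or> oscillates (\<lambda>n. - X n)"
      using oscillates_if_frequently_above_subseq_limit[OF r(1) _ e(1)] r(2)
      unfolding frequently_sequentially by blast
    then show False using osc oscillates_uminus by blast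
  qed
  then show ?thesis by (auto simp: convergent_def)
qed

lemma birkhoff_sum_gt_if_limsup_above:
  assumes "limsup_above (\<lambda>n. birkhoff_avg T f n x) b"
  shows "\<exists>k\<ge>1. real k * b < birkhoff_sum T f k x"
proof -
  obtain j n where n: "n \<ge> 1" "b + 1 / real (Suc j) < birkhoff_avg T f n x"
    using assms unfolding limsup_above_def by blast
  have "b < birkhoff_avg T f n x"
    using n(2) by (smt (verit) divide_pos_pos of_nat_0_less_iff zero_less_Suc)
  then have "real n * b < birkhoff_sum T f n x"
    using n(1) by (simp add: birkhoff_avg_def field_simps)
  then show ?thesis using n(1) by auto
qed

text \<open>Moving the starting point from \<open>x\<close> to \<open>T x\<close> changes the averages only by terms of order
  \<open>1/n\<close>, so the margin \<open>1/(j+1)\<close> survives as \<open>1/(2j+2)\<close>.\<close>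
lemma limsup_above_birkhoff_avg_T:
  assumes "limsup_above (\<lambda>n. birkhoff_avg T f n x) b"
  shows "limsup_above (\<lambda>n. birkhoff_avg T f n (T x)) b"
proof -
  obtain j where j: "\<forall>N. \<exists>n\<ge>N. b + 1 / real (Suc j) < birkhoff_avg T f n x"
    using assms unfolding limsup_above_def by auto
  define \<delta> where "\<delta> = 1 / real (Suc j)"
  have \<delta>: "\<delta> > 0" unfolding \<delta>_def by simp
  define c where "c = b + \<delta>"
  define N0 where "N0 = nat \<lceil>2 * \<bar>c - f x\<bar> / \<delta>\<rceil> + 1"
  have "\<exists>n\<ge>N. b + 1 / real (Suc (2 * j + 1)) < birkhoff_avg T f n (T x)" for N
  proof -
    obtain m where m: "m \<ge> Suc (max N N0)" "c < birkhoff_avg T f m x"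
      using j unfolding c_def \<delta>_def by blast
    then obtain n where mn: "m = Suc n" by (cases m) auto
    have nN: "n \<ge> N" "n \<ge> N0" using m mn by auto
    have n1: "real n \<ge> 1" using nN(2) unfolding N0_def by simp
    have "real n \<ge> 2 * \<bar>c - f x\<bar> / \<delta>" using nN(2) unfolding N0_def by linarith
    then have err: "\<bar>c - f x\<bar> / real n \<le> \<delta> / 2" using \<delta> n1 by (simp add: field_simps)
    have "(real (Suc n) / real n) * c < (real (Suc n) / real n) * birkhoff_avg T f (Suc n) x"
      using m mn n1 by (intro mult_strict_left_mono) auto
    then have "(real (Suc n) / real n) * c - f x / real n < birkhoff_avg T f n (T x)"
      unfolding birkhoff_avg_T by simp
    moreover have "(real (Suc n) / real n) * c - f x / real n = c + (c - f x) / real n"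
      using n1 by (simp add: field_simps)
    moreover have "(c - f x) / real n \<ge> - (\<bar>c - f x\<bar> / real n)"
      using n1 by (simp add: field_simps)
    moreover have "1 / real (Suc (2 * j + 1)) = \<delta> / 2" unfolding \<delta>_def by (simp add: field_simps)
    ultimately show ?thesis
      using err nN(1) unfolding c_def by (intro exI[of _ n]) linarith
  qed
  then show ?thesis unfolding limsup_above_def by blast
qed

context mpt
begin

lemma measurable_limsup_above_birkhoff_avg [measurable]:
  assumes [measurable]: "f \<in> borel_measurable P"
  shows "Measurable.pred P (\<lambda>x. limsup_above (\<lambda>n. birkhoff_avg T f n x) b)"
  unfolding limsup_above_def by measurable

lemma null_set_if_measure_eq_0: "B \<in> sets P \<Longrightarrow> measure P B = 0 \<Longrightarrow> B \<in> null_sets P"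
  by (simp add: emeasure_eq_measure null_setsI)

lemma AE_birkhoff_avg_not_crossing:
  assumes f: "integrable P f" and ab: "a < b"
  shows "AE x in P. \<not> (limsup_above (\<lambda>n. - birkhoff_avg T f n x) (- a)
                     \<and> limsup_above (\<lambda>n. birkhoff_avg T f n x) b)"
proof -
  have [measurable]: "f \<in> borel_measurable P" using f by auto
  define B where "B = {x \<in> space P. limsup_above (\<lambda>n. birkhoff_avg T (\<lambda>x. - f x) n x) (- a)
                                   \<and> limsup_above (\<lambda>n. birkhoff_avg T f n x) b}"
  have B: "B \<in> sets P" unfolding B_def by measurable
  have inv: "T x \<in> B" if "x \<in> B" for x
    using that limsup_above_birkhoff_avg_T[of T "\<lambda>x. - f x" x "- a"]
      limsup_above_birkhoff_avg_T[of T f x b] measurable_space[OF T_measurable, of x]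
    unfolding B_def by auto
  have "b * measure P B \<le> (\<integral>x. indicator B x * f x \<partial>P)"
    by (rule integral_invariant_ge[OF f B inv])
       (use birkhoff_sum_gt_if_limsup_above[of T f _ b] in \<open>auto simp: B_def\<close>)
  also have "\<dots> \<le> a * measure P B"
  proof (rule integral_invariant_le[OF f B inv])
    fix x assume "x \<in> B"
    then obtain k where "k \<ge> 1" "real k * (- a) < birkhoff_sum T (\<lambda>x. - f x) k x"
      using birkhoff_sum_gt_if_limsup_above[of T "\<lambda>x. - f x" x "- a"] unfolding B_def by auto
    then show "\<exists>k\<ge>1. birkhoff_sum T f k x < real k * a" by (auto simp: birkhoff_sum_uminus)
  qed
  finally have "(b - a) * measure P B \<le> 0"
    by (simp add: left_diff_distrib)
  then have "measure P B = 0"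
    using ab measure_nonneg[of P B] by (simp add: mult_le_0_iff)
  then have "AE x in P. x \<notin> B"
    by (intro AE_not_in null_set_if_measure_eq_0 B)
  with AE_space show ?thesis
    by eventually_elim (simp add: B_def birkhoff_avg_uminus)
qed

lemma AE_birkhoff_avg_bounded_above:
  assumes f: "integrable P f"
  shows "AE x in P. \<exists>m::nat. \<not> limsup_above (\<lambda>n. birkhoff_avg T f n x) (real m)"
proof -
  have [measurable]: "f \<in> borel_measurable P" using f by auto
  define B where "B = {x \<in> space P. \<forall>m::nat. limsup_above (\<lambda>n. birkhoff_avg T f n x) (real m)}"
  have B: "B \<in> sets P" unfolding B_def by measurable
  have inv: "T x \<in> B" if "x \<in> B" for x
    using that limsup_above_birkhoff_avg_T[of T f x] measurable_space[OF T_measurable, of x]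
    unfolding B_def by simp
  have bound: "real m * measure P B \<le> (\<integral>x. \<bar>f x\<bar> \<partial>P)" for m
  proof -
    have "real m * measure P B \<le> (\<integral>x. indicator B x * f x \<partial>P)"
      by (rule integral_invariant_ge[OF f B inv])
         (use birkhoff_sum_gt_if_limsup_above[of T f _ "real m"] in \<open>auto simp: B_def\<close>)
    also have "\<dots> \<le> (\<integral>x. \<bar>f x\<bar> \<partial>P)"
      using integrable_mult_indicator[OF B f] f
      by (intro integral_mono integrable_abs) (auto simp: indicator_def)
    finally show ?thesis .
  qed
  have "measure P B = 0"
  proof (rule ccontr)
    assume "measure P B \<noteq> 0"
    then have pos: "measure P B > 0" using measure_nonneg[of P B] by linarith
    obtain m :: nat where "(\<integral>x. \<bar>f x\<bar> \<partial>P) / measure P B < real m"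
      using reals_Archimedean2 by blast
    then show False using bound[of m] pos by (simp add: field_simps)
  qed
  then have "AE x in P. x \<notin> B"
    by (intro AE_not_in null_set_if_measure_eq_0 B)
  with AE_space show ?thesis
    by eventually_elim (simp add: B_def)
qed

lemma AE_birkhoff_avg_convergent:
  assumes f: "integrable P f"
  shows "AE x in P. convergent (\<lambda>n. birkhoff_avg T f n x)"
proof -
  have "AE x in P. \<forall>a b::rat. a < b \<longrightarrow>
      \<not> (limsup_above (\<lambda>n. - birkhoff_avg T f n x) (- of_rat a)
         \<and> limsup_above (\<lambda>n. birkhoff_avg T f n x) (of_rat b))"
    unfolding AE_all_countable
    using AE_birkhoff_avg_not_crossing[OF f, of "of_rat _" "of_rat _"] by (simp add: of_rat_less)
  moreover have "AE x in P. \<exists>m::nat. \<not> limsup_above (\<lambda>n. birkhoff_avg T f n x) (real m)"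
    by (rule AE_birkhoff_avg_bounded_above[OF f])
  moreover have "AE x in P. \<exists>m::nat. \<not> limsup_above (\<lambda>n. - birkhoff_avg T f n x) (real m)"
    using AE_birkhoff_avg_bounded_above[of "\<lambda>x. - f x"] f by (simp add: birkhoff_avg_uminus)
  ultimately show ?thesis
  proof eventually_elim
    case (elim x)
    then obtain m m' where "\<not> limsup_above (\<lambda>n. birkhoff_avg T f n x) (real m)"
      "\<not> limsup_above (\<lambda>n. - birkhoff_avg T f n x) (real m')" by blast
    then show ?case
      using elim(1) by (intro convergent_if_not_oscillates) (auto simp: oscillates_def)
  qed
qed

end

section \<open>The limit in \<open>L\<^sup>1\<close> and as a conditional expectation\<close>

definition birkhoff_lim :: "('a \<Rightarrow> 'a) \<Rightarrow> ('a \<Rightarrow> real) \<Rightarrow> 'a \<Rightarrow> real" where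
  "birkhoff_lim T f x =
     (if convergent (\<lambda>n. birkhoff_avg T f n x) then lim (\<lambda>n. birkhoff_avg T f n x) else 0)"

lemma birkhoff_avg_tendsto_lim:
  "convergent (\<lambda>n. birkhoff_avg T f n x) \<Longrightarrow> (\<lambda>n. birkhoff_avg T f n x) \<longlonglongrightarrow> birkhoff_lim T f x"
  by (simp add: birkhoff_lim_def convergent_LIMSEQ_iff)

lemma birkhoff_avg_T_tendsto_iff:
  "(\<lambda>n. birkhoff_avg T f n (T x)) \<longlonglongrightarrow> l \<longleftrightarrow> (\<lambda>n. birkhoff_avg T f n x) \<longlonglongrightarrow> l"
proof
  assume lim: "(\<lambda>n. birkhoff_avg T f n (T x)) \<longlonglongrightarrow> l"
  have "(\<lambda>n. (real n / real (Suc n)) * birkhoff_avg T f n (T x) + f x / real (Suc n)) \<longlonglongrightarrow> 1 * l + 0"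
    by (intro tendsto_add tendsto_mult LIMSEQ_n_over_Suc_n lim LIMSEQ_Suc[OF lim_const_over_n])
  then have "(\<lambda>n. birkhoff_avg T f (Suc n) x) \<longlonglongrightarrow> l"
    unfolding birkhoff_avg_Suc by simp
  then show "(\<lambda>n. birkhoff_avg T f n x) \<longlonglongrightarrow> l"
    by (rule LIMSEQ_imp_Suc)
next
  assume lim: "(\<lambda>n. birkhoff_avg T f n x) \<longlonglongrightarrow> l"
  have "(\<lambda>n. (real (Suc n) / real n) * birkhoff_avg T f (Suc n) x - f x / real n) \<longlonglongrightarrow> 1 * l - 0"
    by (intro tendsto_diff tendsto_mult LIMSEQ_Suc_n_over_n LIMSEQ_Suc[OF lim] lim_const_over_n)
  then show "(\<lambda>n. birkhoff_avg T f n (T x)) \<longlonglongrightarrow> l"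
    unfolding birkhoff_avg_T by simp
qed

lemma birkhoff_lim_T: "birkhoff_lim T f (T x) = birkhoff_lim T f x"
proof -
  have "convergent (\<lambda>n. birkhoff_avg T f n (T x)) \<longleftrightarrow> convergent (\<lambda>n. birkhoff_avg T f n x)"
    by (simp add: convergent_def birkhoff_avg_T_tendsto_iff)
  moreover have "lim (\<lambda>n. birkhoff_avg T f n (T x)) = lim (\<lambda>n. birkhoff_avg T f n x)"
    by (simp add: lim_def birkhoff_avg_T_tendsto_iff)
  ultimately show ?thesis
    by (simp add: birkhoff_lim_def)
qed

lemma abs_birkhoff_lim_bounded:
  assumes "\<And>x. \<bar>f x\<bar> \<le> C" "0 \<le> C"
  shows "\<bar>birkhoff_lim T f x\<bar> \<le> C"
proof (cases "convergent (\<lambda>n. birkhoff_avg T f n x)")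
  case True
  then have "(\<lambda>n. \<bar>birkhoff_avg T f n x\<bar>) \<longlonglongrightarrow> \<bar>birkhoff_lim T f x\<bar>"
    by (intro tendsto_rabs birkhoff_avg_tendsto_lim)
  then show ?thesis
    by (rule LIMSEQ_le_const2) (intro exI[of _ 0] allI impI abs_birkhoff_avg_bounded assms)
qed (simp add: birkhoff_lim_def assms(2))

lemma
  fixes u :: "'a \<Rightarrow> real" and h :: "nat \<Rightarrow> 'a \<Rightarrow> real"
  assumes h: "\<And>n. integrable M (h n)" and u [measurable]: "u \<in> borel_measurable M"
    and lim: "AE x in M. (\<lambda>n. h n x) \<longlonglongrightarrow> u x" and bound: "\<And>n. (\<integral>x. \<bar>h n x\<bar> \<partial>M) \<le> C"
  shows integrable_of_AE_tendsto: "integrable M u"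
    and integral_abs_le_of_AE_tendsto: "(\<integral>x. \<bar>u x\<bar> \<partial>M) \<le> C"
proof -
  have [measurable]: "h n \<in> borel_measurable M" for n using h by auto
  have "0 \<le> (\<integral>x. \<bar>h 0 x\<bar> \<partial>M)" by (rule integral_nonneg_AE) simp
  then have C: "0 \<le> C" using bound[of 0] by linarith
  have "(\<integral>\<^sup>+x. ennreal \<bar>u x\<bar> \<partial>M) = (\<integral>\<^sup>+x. liminf (\<lambda>n. ennreal \<bar>h n x\<bar>) \<partial>M)"
  proof (rule nn_integral_cong_AE)
    show "AE x in M. ennreal \<bar>u x\<bar> = liminf (\<lambda>n. ennreal \<bar>h n x\<bar>)"
      using lim
    proof eventually_elim
      case (elim x)
      then have "(\<lambda>n. ennreal \<bar>h n x\<bar>) \<longlonglongrightarrow> ennreal \<bar>u x\<bar>"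
        by (intro tendsto_ennrealI tendsto_rabs)
      then show ?case by (rule lim_imp_Liminf[symmetric, rotated]) simp
    qed
  qed
  also have "\<dots> \<le> liminf (\<lambda>n. \<integral>\<^sup>+x. ennreal \<bar>h n x\<bar> \<partial>M)"
    by (rule nn_integral_liminf) simp
  also have "\<dots> = liminf (\<lambda>n. ennreal (\<integral>x. \<bar>h n x\<bar> \<partial>M))"
    by (intro arg_cong[where f=liminf] ext nn_integral_eq_integral integrable_abs h) auto
  also have "\<dots> \<le> limsup (\<lambda>n. ennreal (\<integral>x. \<bar>h n x\<bar> \<partial>M))"
    by (rule Liminf_le_Limsup) simp
  also have "\<dots> \<le> ennreal C"
    by (intro Limsup_bounded always_eventually allI ennreal_leI bound)
  finally have le: "(\<integral>\<^sup>+x. ennreal \<bar>u x\<bar> \<partial>M) \<le> ennreal C" .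
  then show u_int: "integrable M u"
    unfolding integrable_iff_bounded by (auto simp: top_unique less_top[symmetric])
  have "ennreal (\<integral>x. \<bar>u x\<bar> \<partial>M) \<le> ennreal C"
    using le nn_integral_eq_integral[of M "\<lambda>x. \<bar>u x\<bar>"] u_int by simp
  then show "(\<integral>x. \<bar>u x\<bar> \<partial>M) \<le> C"
    using ennreal_le_iff[OF C] by blast
qed

context mpt
begin

lemma birkhoff_lim_measurable [measurable]:
  assumes [measurable]: "f \<in> borel_measurable P"
  shows "birkhoff_lim T f \<in> borel_measurable P"
proof -
  have "{x \<in> space P. convergent (\<lambda>n. birkhoff_avg T f n x)}
      = {x \<in> space P. Cauchy (\<lambda>n. birkhoff_avg T f n x)}"
    by (simp add: Cauchy_convergent_iff)
  also have "\<dots> \<in> sets P" by measurable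
  finally show ?thesis
    unfolding birkhoff_lim_def
    by (rule measurable_If[rotated 2]) (auto intro!: borel_measurable_lim_metric)
qed

lemma AE_birkhoff_avg_tendsto_lim:
  assumes "integrable P f"
  shows "AE x in P. (\<lambda>n. birkhoff_avg T f n x) \<longlonglongrightarrow> birkhoff_lim T f x"
  using AE_birkhoff_avg_convergent[OF assms] by eventually_elim (rule birkhoff_avg_tendsto_lim)

lemma integrable_birkhoff_lim: "integrable P f \<Longrightarrow> integrable P (birkhoff_lim T f)"
  by (rule integrable_of_AE_tendsto[OF integrable_birkhoff_avg _ AE_birkhoff_avg_tendsto_lim
        integral_abs_birkhoff_avg_le]) auto

end

context mpt
begin

lemma tendsto_L1_birkhoff_lim_bounded:
  assumes [measurable]: "f \<in> borel_measurable P" and bound: "\<And>x. \<bar>f x\<bar> \<le> C"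
  shows "(\<lambda>n. \<integral>x. \<bar>birkhoff_avg T f n x - birkhoff_lim T f x\<bar> \<partial>P) \<longlonglongrightarrow> 0"
proof -
  have C: "0 \<le> C" using bound[of undefined] by linarith
  have f: "integrable P f"
    by (rule Bochner_Integration.integrable_bound[of P "\<lambda>_. C"]) (use bound C in auto)
  have "AE x in P. (\<lambda>n. \<bar>birkhoff_avg T f n x - birkhoff_lim T f x\<bar>) \<longlonglongrightarrow> 0"
    using AE_birkhoff_avg_tendsto_lim[OF f] by eventually_elim (simp add: LIM_zero tendsto_rabs_zero)
  moreover have "\<bar>birkhoff_avg T f n x - birkhoff_lim T f x\<bar> \<le> 2 * C" for n x
    using abs_birkhoff_avg_bounded[of f C T n x, OF bound C]
      abs_birkhoff_lim_bounded[of f C T x, OF bound C]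
      abs_triangle_ineq4[of "birkhoff_avg T f n x" "birkhoff_lim T f x"]
    by (smt (verit))
  ultimately have "(\<lambda>n. \<integral>x. \<bar>birkhoff_avg T f n x - birkhoff_lim T f x\<bar> \<partial>P) \<longlonglongrightarrow> (\<integral>x. 0 \<partial>P)"
    by (intro integral_dominated_convergence[where w="\<lambda>_. 2 * C"]) auto
  then show ?thesis by simp
qed

text \<open>The averages and limits of \<open>f - h\<close> are controlled by \<open>\<integral>|f - h|\<close>: the averages because \<open>T\<close>
  preserves \<open>P\<close>, the limits by Fatou's lemma.\<close>
lemma integral_abs_birkhoff_avg_lim_diff_le:
  assumes f: "integrable P f" and h: "integrable P h"
  shows "(\<integral>x. \<bar>birkhoff_avg T f n x - birkhoff_lim T f x\<bar> \<partial>P)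
    \<le> 2 * (\<integral>x. \<bar>f x - h x\<bar> \<partial>P) + (\<integral>x. \<bar>birkhoff_avg T h n x - birkhoff_lim T h x\<bar> \<partial>P)"
proof -
  have fh: "integrable P (\<lambda>x. f x - h x)" using f h by simp
  have [measurable]: "f \<in> borel_measurable P" "h \<in> borel_measurable P" using f h by auto
  have avg: "(\<integral>x. \<bar>birkhoff_avg T (\<lambda>x. f x - h x) n x\<bar> \<partial>P) \<le> (\<integral>x. \<bar>f x - h x\<bar> \<partial>P)"
    by (rule integral_abs_birkhoff_avg_le[OF fh])
  have lim_diff: "AE x in P. (\<lambda>n. birkhoff_avg T (\<lambda>x. f x - h x) n x)
      \<longlonglongrightarrow> birkhoff_lim T f x - birkhoff_lim T h x"
    using AE_birkhoff_avg_tendsto_lim[OF f] AE_birkhoff_avg_tendsto_lim[OF h]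
    by eventually_elim (unfold birkhoff_avg_diff, intro tendsto_diff)
  have lim: "(\<integral>x. \<bar>birkhoff_lim T f x - birkhoff_lim T h x\<bar> \<partial>P) \<le> (\<integral>x. \<bar>f x - h x\<bar> \<partial>P)"
    by (rule integral_abs_le_of_AE_tendsto[OF integrable_birkhoff_avg[OF fh] _ lim_diff
          integral_abs_birkhoff_avg_le[OF fh]]) measurable
  have i1: "integrable P (\<lambda>x. \<bar>birkhoff_avg T (\<lambda>x. f x - h x) n x\<bar>)"
    by (intro integrable_abs integrable_birkhoff_avg fh)
  have i2: "integrable P (\<lambda>x. \<bar>birkhoff_avg T h n x - birkhoff_lim T h x\<bar>)"
    by (intro integrable_abs Bochner_Integration.integrable_diff integrable_birkhoff_avg
        integrable_birkhoff_lim h)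
  have i3: "integrable P (\<lambda>x. \<bar>birkhoff_lim T f x - birkhoff_lim T h x\<bar>)"
    by (intro integrable_abs Bochner_Integration.integrable_diff integrable_birkhoff_lim f h)
  have "(\<integral>x. \<bar>birkhoff_avg T f n x - birkhoff_lim T f x\<bar> \<partial>P)
      \<le> (\<integral>x. \<bar>birkhoff_avg T (\<lambda>x. f x - h x) n x\<bar> + \<bar>birkhoff_avg T h n x - birkhoff_lim T h x\<bar>
              + \<bar>birkhoff_lim T f x - birkhoff_lim T h x\<bar> \<partial>P)"
    using i1 i2 i3 f h
    by (intro integral_mono integrable_abs Bochner_Integration.integrable_diff
        integrable_birkhoff_avg integrable_birkhoff_lim Bochner_Integration.integrable_add)
       (auto simp: birkhoff_avg_diff)
  also have "\<dots> = (\<integral>x. \<bar>birkhoff_avg T (\<lambda>x. f x - h x) n x\<bar> \<partial>P)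
      + (\<integral>x. \<bar>birkhoff_avg T h n x - birkhoff_lim T h x\<bar> \<partial>P)
      + (\<integral>x. \<bar>birkhoff_lim T f x - birkhoff_lim T h x\<bar> \<partial>P)"
    using i1 i2 i3 by simp
  finally show ?thesis using avg lim by linarith
qed

lemma tendsto_L1_birkhoff_lim:
  assumes f: "integrable P f"
  shows "(\<lambda>n. \<integral>x. \<bar>birkhoff_avg T f n x - birkhoff_lim T f x\<bar> \<partial>P) \<longlonglongrightarrow> 0"
proof -
  have [measurable]: "f \<in> borel_measurable P" using f by auto
  define f' where "f' k x = max (- real k) (min (real k) (f x))" for k x
  have [measurable]: "f' k \<in> borel_measurable P" for k unfolding f'_def by measurable
  have f'_bound: "\<bar>f' k x\<bar> \<le> real k" for k x unfolding f'_def by auto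
  have f'_int: "integrable P (f' k)" for k
    by (rule Bochner_Integration.integrable_bound[of P "\<lambda>_. real k"]) (auto intro!: f'_bound)
  have "(\<lambda>k. \<integral>x. \<bar>f x - f' k x\<bar> \<partial>P) \<longlonglongrightarrow> (\<integral>x. 0 \<partial>P)"
  proof (rule integral_dominated_convergence[where w="\<lambda>x. \<bar>f x\<bar>"])
    have "\<forall>\<^sub>F k in sequentially. \<bar>f x - f' k x\<bar> = 0" for x
      using eventually_ge_at_top[of "nat \<lceil>\<bar>f x\<bar>\<rceil>"]
    proof eventually_elim
      case (elim k)
      then have "\<bar>f x\<bar> \<le> real k"
        using real_nat_ceiling_ge[of "\<bar>f x\<bar>"] of_nat_le_iff by (smt (verit))
      then show ?case by (auto simp: f'_def)
    qed
    then show "AE x in P. (\<lambda>k. \<bar>f x - f' k x\<bar>) \<longlonglongrightarrow> 0"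
      by (intro AE_I2 tendsto_eventually)
  qed (use f in \<open>auto simp: f'_def\<close>)
  then have trunc: "(\<lambda>k. \<integral>x. \<bar>f x - f' k x\<bar> \<partial>P) \<longlonglongrightarrow> 0" by simp
  have nonneg: "0 \<le> (\<integral>x. \<bar>g x\<bar> \<partial>P)" for g :: "'a \<Rightarrow> real"
    by (rule integral_nonneg_AE) simp
  show ?thesis
  proof (rule LIMSEQ_I)
    fix r :: real assume r: "0 < r"
    obtain k where k: "(\<integral>x. \<bar>f x - f' k x\<bar> \<partial>P) < r / 3"
      using LIMSEQ_D[OF trunc, of "r / 3"] r nonneg by auto
    have "(\<lambda>n. \<integral>x. \<bar>birkhoff_avg T (f' k) n x - birkhoff_lim T (f' k) x\<bar> \<partial>P) \<longlonglongrightarrow> 0"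
      by (rule tendsto_L1_birkhoff_lim_bounded[OF _ f'_bound]) measurable
    from LIMSEQ_D[OF this, of "r / 3"] r obtain N where N: "\<And>n. n \<ge> N \<Longrightarrow>
        (\<integral>x. \<bar>birkhoff_avg T (f' k) n x - birkhoff_lim T (f' k) x\<bar> \<partial>P) < r / 3"
      using nonneg by (auto simp: abs_of_nonneg)
    have "norm (\<integral>x. \<bar>birkhoff_avg T f n x - birkhoff_lim T f x\<bar> \<partial>P) < r" if "n \<ge> N" for n
      using integral_abs_birkhoff_avg_lim_diff_le[OF f f'_int, of n k] k N[OF that] nonneg by simp
    then show "\<exists>N. \<forall>n\<ge>N. norm ((\<integral>x. \<bar>birkhoff_avg T f n x - birkhoff_lim T f x\<bar> \<partial>P) - 0) < r"
      by auto
  qed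
qed

end

context mpt
begin

lemma sets_invariant_sigma: "sets (invariant_sigma P T) = invariant_sets P T"
proof -
  have sub: "invariant_sets P T \<subseteq> Pow (space P)"
    unfolding invariant_sets_def using sets.sets_into_space by auto
  have "A \<in> invariant_sets P T" if "A \<in> sigma_sets (space P) (invariant_sets P T)" for A
    using that
  proof (induction rule: sigma_sets.induct)
    case (Compl a)
    have "T -` (space P - a) \<inter> space P = space P - (T -` a \<inter> space P)"
      using measurable_space[OF T_measurable] by auto
    then show ?case using Compl by (auto simp: invariant_sets_def)
  next
    case (Union a)
    have "T -` (\<Union>i. a i) \<inter> space P = (\<Union>i. T -` a i \<inter> space P)" by auto
    also have "\<dots> = (\<Union>i. a i)" using Union by (simp add: invariant_sets_def)
    finally show ?case using Union by (auto simp: invariant_sets_def)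
  qed (auto simp: invariant_sets_def)
  then show ?thesis
    unfolding invariant_sigma_def using sub by (auto intro: sigma_sets.Basic)
qed

lemma space_invariant_sigma: "space (invariant_sigma P T) = space P"
proof -
  have "invariant_sets P T \<subseteq> Pow (space P)"
    unfolding invariant_sets_def using sets.sets_into_space by auto
  then show ?thesis unfolding invariant_sigma_def by simp
qed

lemma sigma_finite_subalgebra_invariant: "sigma_finite_subalgebra P (invariant_sigma P T)"
proof -
  have "subalgebra P (invariant_sigma P T)"
    unfolding subalgebra_def sets_invariant_sigma space_invariant_sigma invariant_sets_def by auto
  then have "finite_measure_subalgebra P (invariant_sigma P T)"
    unfolding finite_measure_subalgebra_def finite_measure_subalgebra_axioms_def
    using finite_measure_axioms by auto
  then show ?thesis by (rule finite_measure_subalgebra_is_sigma_finite)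
qed

lemma birkhoff_lim_measurable_invariant:
  assumes [measurable]: "f \<in> borel_measurable P"
  shows "birkhoff_lim T f \<in> borel_measurable (invariant_sigma P T)"
proof (rule measurableI)
  fix A :: "real set" assume [measurable]: "A \<in> sets borel"
  have "T -` (birkhoff_lim T f -` A \<inter> space P) \<inter> space P = birkhoff_lim T f -` A \<inter> space P"
    using measurable_space[OF T_measurable] birkhoff_lim_T[of T f] by auto
  then show "birkhoff_lim T f -` A \<inter> space (invariant_sigma P T) \<in> sets (invariant_sigma P T)"
    unfolding sets_invariant_sigma space_invariant_sigma invariant_sets_def by simp
qed (simp add: space_invariant_sigma)

lemma Tn_in_invariant_iff:
  assumes "A \<in> invariant_sets P T" "x \<in> space P"
  shows "(T ^^ i) x \<in> A \<longleftrightarrow> x \<in> A"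
  using assms(2)
proof (induction i arbitrary: x)
  case (Suc i)
  then have "T x \<in> space P" "T x \<in> A \<longleftrightarrow> x \<in> A"
    using measurable_space[OF T_measurable] assms(1) by (auto simp: invariant_sets_def)
  then show ?case
    using Suc.IH by (simp add: funpow_Suc_right del: funpow.simps)
qed simp

lemma integral_indicator_birkhoff_avg:
  assumes A: "A \<in> invariant_sets P T" and f: "integrable P f" and n: "n \<ge> 1"
  shows "(\<integral>x. indicator A x * birkhoff_avg T f n x \<partial>P) = (\<integral>x. indicator A x * f x \<partial>P)"
proof -
  have AP: "A \<in> sets P" using A by (simp add: invariant_sets_def)
  have "indicator A x * birkhoff_avg T f n x = birkhoff_avg T (\<lambda>y. indicator A y * f y) n x"
    if "x \<in> space P" for x
    using Tn_in_invariant_iff[OF A that]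
    unfolding birkhoff_avg_def birkhoff_sum_def by (simp add: sum_distrib_left indicator_def)
  then have "(\<integral>x. indicator A x * birkhoff_avg T f n x \<partial>P)
      = (\<integral>x. birkhoff_avg T (\<lambda>y. indicator A y * f y) n x \<partial>P)"
    by (rule Bochner_Integration.integral_cong[OF refl])
  also have "\<dots> = (\<integral>x. indicator A x * f x \<partial>P)"
    using integrable_mult_indicator[OF AP f] n by (intro integral_birkhoff_avg) simp_all
  finally show ?thesis .
qed

lemma AE_cond_exp_invariant_eq_birkhoff_lim:
  assumes f: "integrable P f"
  shows "AE x in P. real_cond_exp P (invariant_sigma P T) f x = birkhoff_lim T f x"
proof -
  interpret S: sigma_finite_subalgebra P "invariant_sigma P T"
    by (rule sigma_finite_subalgebra_invariant)
  have [measurable]: "f \<in> borel_measurable P" using f by auto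
  show ?thesis
  proof (rule S.real_cond_exp_charact)
    fix A assume "A \<in> sets (invariant_sigma P T)"
    then have A: "A \<in> invariant_sets P T" by (simp add: sets_invariant_sigma)
    then have AP: "A \<in> sets P" by (simp add: invariant_sets_def)
    define d where "d = (\<integral>x. indicator A x * birkhoff_lim T f x \<partial>P) - (\<integral>x. indicator A x * f x \<partial>P)"
    have "\<bar>d\<bar> \<le> (\<integral>x. \<bar>birkhoff_avg T f n x - birkhoff_lim T f x\<bar> \<partial>P)" if n: "n \<ge> 1" for n
    proof -
      have "d = (\<integral>x. indicator A x * (birkhoff_lim T f x - birkhoff_avg T f n x) \<partial>P)"
        unfolding d_def integral_indicator_birkhoff_avg[OF A f n, symmetric]
        using integrable_mult_indicator[OF AP integrable_birkhoff_lim[OF f]]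
          integrable_mult_indicator[OF AP integrable_birkhoff_avg[OF f]]
        by (simp add: right_diff_distrib)
      also have "\<bar>\<dots>\<bar> \<le> (\<integral>x. \<bar>indicator A x * (birkhoff_lim T f x - birkhoff_avg T f n x)\<bar> \<partial>P)"
        by (rule integral_abs_bound)
      also have "\<dots> \<le> (\<integral>x. \<bar>birkhoff_avg T f n x - birkhoff_lim T f x\<bar> \<partial>P)"
      proof (rule integral_mono)
        show "integrable P (\<lambda>x. \<bar>indicator A x * (birkhoff_lim T f x - birkhoff_avg T f n x)\<bar>)"
          using integrable_mult_indicator[OF AP Bochner_Integration.integrable_diff[OF
              integrable_birkhoff_lim[OF f] integrable_birkhoff_avg[OF f]]] by simp
        show "integrable P (\<lambda>x. \<bar>birkhoff_avg T f n x - birkhoff_lim T f x\<bar>)"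
          using f by (intro integrable_abs Bochner_Integration.integrable_diff
              integrable_birkhoff_lim integrable_birkhoff_avg)
      qed (auto simp: indicator_def)
      finally show ?thesis .
    qed
    then have "\<bar>d\<bar> \<le> 0"
      by (intro LIMSEQ_le_const[OF tendsto_L1_birkhoff_lim[OF f]] exI[of _ 1]) auto
    then show "(\<integral>x\<in>A. f x \<partial>P) = (\<integral>x\<in>A. birkhoff_lim T f x \<partial>P)"
      unfolding set_lebesgue_integral_def d_def by simp
  qed (use f integrable_birkhoff_lim[OF f] birkhoff_lim_measurable_invariant in auto)
qed

theorem birkhoff_ergodic_theorem:
  assumes f: "integrable P f"
  shows "AE x in P. (\<lambda>n. birkhoff_avg T f n x) \<longlonglongrightarrow> real_cond_exp P (invariant_sigma P T) f x"
    and "(\<lambda>n. \<integral>x. \<bar>birkhoff_avg T f n x - real_cond_exp P (invariant_sigma P T) f x\<bar> \<partial>P) \<longlonglongrightarrow> 0"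
proof -
  show "AE x in P. (\<lambda>n. birkhoff_avg T f n x) \<longlonglongrightarrow> real_cond_exp P (invariant_sigma P T) f x"
    using AE_birkhoff_avg_tendsto_lim[OF f] AE_cond_exp_invariant_eq_birkhoff_lim[OF f]
    by eventually_elim simp
  have "(\<integral>x. \<bar>birkhoff_avg T f n x - real_cond_exp P (invariant_sigma P T) f x\<bar> \<partial>P)
      = (\<integral>x. \<bar>birkhoff_avg T f n x - birkhoff_lim T f x\<bar> \<partial>P)" for n
    using AE_cond_exp_invariant_eq_birkhoff_lim[OF f]
    by (intro integral_cong_AE) (use f in auto)
  then show "(\<lambda>n. \<integral>x. \<bar>birkhoff_avg T f n x - real_cond_exp P (invariant_sigma P T) f x\<bar> \<partial>P) \<longlonglongrightarrow> 0"
    using tendsto_L1_birkhoff_lim[OF f] by simp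
qed

lemma AE_cond_exp_invariant_ergodic:
  assumes erg: "ergodic P T" and f: "integrable P f"
  shows "AE x in P. real_cond_exp P (invariant_sigma P T) f x = (\<integral>y. f y \<partial>P)"
proof -
  interpret S: sigma_finite_subalgebra P "invariant_sigma P T"
    by (rule sigma_finite_subalgebra_invariant)
  have [measurable]: "f \<in> borel_measurable P" using f by auto
  show ?thesis
  proof (rule S.real_cond_exp_charact)
    fix A assume "A \<in> sets (invariant_sigma P T)"
    then have A: "A \<in> invariant_sets P T" by (simp add: sets_invariant_sigma)
    then have AP: "A \<in> sets P" by (simp add: invariant_sets_def)
    show "(\<integral>x\<in>A. f x \<partial>P) = (\<integral>x\<in>A. (\<integral>y. f y \<partial>P) \<partial>P)"
    proof (cases "measure P A = 0")
      case True
      then have "A \<in> null_sets P" by (rule null_set_if_measure_eq_0[OF AP])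
      then have "(\<integral>x\<in>A. g x \<partial>P) = (\<integral>x\<in>{}. g x \<partial>P)" if "integrable P g" for g :: "'a \<Rightarrow> real"
        using AP by (intro set_integral_null_delta that) auto
      then show ?thesis using f True by (simp add: set_lebesgue_integral_def sets.Int_space_eq2 AP)
    next
      case False
      with A erg have "measure P A = 1"
        unfolding ergodic_def by blast
      then have "measure P (space P - A) = 0"
        by (simp add: prob_compl AP)
      then have "space P - A \<in> null_sets P"
        by (intro null_set_if_measure_eq_0 sets.compl_sets AP)
      then have "(\<integral>x\<in>A. g x \<partial>P) = (\<integral>x\<in>space P. g x \<partial>P)" if "integrable P g" for g :: "'a \<Rightarrow> real"
        using AP sets.sets_into_space[OF AP]
        by (intro set_integral_null_delta that) (auto simp: Diff_eq_empty_iff[THEN iffD2])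
      then show ?thesis using f by (simp add: set_integral_space prob_space)
    qed
  qed (use f in auto)
qed

end

section \<open>Interleaved averages\<close>

lemma birkhoff_sum_add:
  "birkhoff_sum T f (m + n) x = birkhoff_sum T f m x + birkhoff_sum T f n ((T ^^ m) x)"
proof (induction n)
  case (Suc n)
  have "(T ^^ (m + n)) x = (T ^^ n) ((T ^^ m) x)"
    by (metis add.commute comp_apply funpow_add)
  then show ?case using Suc by (simp add: birkhoff_sum_def add.assoc)
qed (simp add: birkhoff_sum_def)

lemma sum_lessThan_add_nat: "(\<Sum>i<a + b. h i) = (\<Sum>i<a. h i) + (\<Sum>i<b. h (a + i))"
  for a b :: nat
  by (induction b) (simp_all add: add.assoc)

lemma sum_lessThan_div_mod:
  fixes H :: "nat \<Rightarrow> nat \<Rightarrow> 'a::comm_monoid_add"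
  shows "(\<Sum>i<n. H (i div q) (i mod q))
    = (\<Sum>j<n div q. \<Sum>\<nu><q. H j \<nu>) + (\<Sum>\<nu><n mod q. H (n div q) \<nu>)"
proof (cases "q = 0")
  case False
  define h where "h i = H (i div q) (i mod q)" for i
  have h: "h (q * j + \<nu>) = H j \<nu>" if "\<nu> < q" for j \<nu>
    using that by (simp add: h_def)
  have blocks: "(\<Sum>i<q * m. h i) = (\<Sum>j<m. \<Sum>\<nu><q. h (q * j + \<nu>))" for m
  proof (induction m)
    case (Suc m)
    have "(\<Sum>i<q * Suc m. h i) = (\<Sum>i<q * m + q. h i)" by (simp add: add.commute)
    then show ?case using Suc by (simp add: sum_lessThan_add_nat)
  qed simp
  have "(\<Sum>i<n. h i) = (\<Sum>i<q * (n div q) + n mod q. h i)"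
    by simp
  also have "\<dots> = (\<Sum>j<n div q. \<Sum>\<nu><q. h (q * j + \<nu>)) + (\<Sum>\<nu><n mod q. h (q * (n div q) + \<nu>))"
    by (simp only: sum_lessThan_add_nat blocks)
  also have "\<dots> = (\<Sum>j<n div q. \<Sum>\<nu><q. H j \<nu>) + (\<Sum>\<nu><n mod q. H (n div q) \<nu>)"
  proof -
    have "n mod q < q" using False by simp
    then have "(\<Sum>\<nu><n mod q. h (q * (n div q) + \<nu>)) = (\<Sum>\<nu><n mod q. H (n div q) \<nu>)"
      using h by (intro sum.cong) auto
    moreover have "(\<Sum>j<n div q. \<Sum>\<nu><q. h (q * j + \<nu>)) = (\<Sum>j<n div q. \<Sum>\<nu><q. H j \<nu>)"
      using h by (intro sum.cong) auto
    ultimately show ?thesis by simp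
  qed
  finally show ?thesis unfolding h_def .
qed simp

lemma sum_interleaved_eq_birkhoff_sum:
  "(\<Sum>i<n. f (i mod q) ((T ^^ (i div q)) x))
    = birkhoff_sum T (\<lambda>y. \<Sum>\<nu><q. f \<nu> y) (n div q) x + (\<Sum>\<nu><n mod q. f \<nu> ((T ^^ (n div q)) x))"
  using sum_lessThan_div_mod[where H="\<lambda>j \<nu>. f \<nu> ((T ^^ j) x)"] by (simp add: birkhoff_sum_def)

lemma filterlim_div_nat_sequentially:
  "0 < q \<Longrightarrow> filterlim (\<lambda>n::nat. n div q) sequentially sequentially"
  unfolding filterlim_at_top eventually_sequentially
  by (metis div_le_mono div_mult_self1_is_m mult.commute)

lemma tendsto_div_nat_over_n:
  assumes q: "0 < q"
  shows "(\<lambda>n::nat. real (n div q) / real n) \<longlonglongrightarrow> 1 / real q"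
proof (rule tendsto_sandwich[where f="\<lambda>n. 1 / real q - 1 / real n" and h="\<lambda>n. 1 / real q"])
  have "real (n div q) / real n \<le> 1 / real q" if "n \<ge> 1" for n
  proof -
    have "real (n div q) * real q \<le> real n"
      by (metis of_nat_le_iff of_nat_mult div_times_less_eq_dividend)
    then show ?thesis using that q by (simp add: field_simps)
  qed
  then show "\<forall>\<^sub>F n in sequentially. real (n div q) / real n \<le> 1 / real q"
    unfolding eventually_sequentially by blast
  have "1 / real q - 1 / real n \<le> real (n div q) / real n" if "n \<ge> 1" for n
  proof -
    have "real n = real q * real (n div q) + real (n mod q)"
      by (metis mult_div_mod_eq of_nat_add of_nat_mult)
    moreover have "real (n mod q) \<le> real q" using q by simp
    ultimately have "real n - real q \<le> real q * real (n div q)" by linarith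
    then have "(real n - real q) / real q / real n \<le> real (n div q) / real n"
      using q by (intro divide_right_mono) (simp_all add: pos_divide_le_eq mult.commute)
    moreover have "(real n - real q) / real q / real n = 1 / real q - 1 / real n"
      using that q by (simp add: field_simps)
    ultimately show ?thesis by simp
  qed
  then show "\<forall>\<^sub>F n in sequentially. 1 / real q - 1 / real n \<le> real (n div q) / real n"
    unfolding eventually_sequentially by blast
  show "(\<lambda>n. 1 / real q - 1 / real n) \<longlonglongrightarrow> 1 / real q"
    using tendsto_diff[OF tendsto_const[of "1 / real q"] lim_const_over_n[of 1]] by simp
qed simp

lemma tendsto_last_term_if_birkhoff_avg_convergent:
  assumes "convergent (\<lambda>n. birkhoff_avg T f n x)"
  shows "(\<lambda>m. f ((T ^^ m) x) / real (Suc m)) \<longlonglongrightarrow> 0"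
proof -
  obtain l where l: "(\<lambda>n. birkhoff_avg T f n x) \<longlonglongrightarrow> l"
    using assms by (auto simp: convergent_def)
  have "f ((T ^^ m) x) / real (Suc m)
      = birkhoff_avg T f (Suc m) x - (real m / real (Suc m)) * birkhoff_avg T f m x" for m
    unfolding birkhoff_avg_def birkhoff_sum_def
    by (cases "m = 0") (simp_all add: add_divide_distrib del: of_nat_Suc)
  moreover have "(\<lambda>m. birkhoff_avg T f (Suc m) x - (real m / real (Suc m)) * birkhoff_avg T f m x)
      \<longlonglongrightarrow> l - 1 * l"
    by (intro tendsto_diff tendsto_mult LIMSEQ_Suc[OF l] LIMSEQ_n_over_Suc_n l)
  ultimately show ?thesis by simp
qed

lemma tendsto_interleaved_average:
  fixes X Y R :: "nat \<Rightarrow> real"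
  assumes q: "0 < q" and X: "X \<longlonglongrightarrow> c" and Y: "(\<lambda>m. Y m / real (Suc m)) \<longlonglongrightarrow> 0"
    and R: "\<And>n. \<bar>R n\<bar> \<le> Y (n div q)"
  shows "(\<lambda>n. (real (n div q) / real n) * X (n div q) + R n / real n) \<longlonglongrightarrow> c / real q"
proof -
  note div = filterlim_div_nat_sequentially[OF q]
  have "(\<lambda>n. R n / real n) \<longlonglongrightarrow> 0"
  proof (rule Lim_null_comparison)
    have "norm (R n / real n) \<le> 2 * (Y (n div q) / real (Suc (n div q)))" if n: "n \<ge> 1" for n
    proof -
      have Y0: "0 \<le> Y (n div q)" using R[of n] by linarith
      have "real (Suc (n div q)) \<le> 2 * real n"
        using n div_le_dividend[of n q] by linarith
      then have "2 * Y (n div q) / (2 * real n) \<le> 2 * Y (n div q) / real (Suc (n div q))"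
        using Y0 n by (intro divide_left_mono) auto
      then have "Y (n div q) / real n \<le> 2 * (Y (n div q) / real (Suc (n div q)))"
        by simp
      moreover have "norm (R n / real n) \<le> Y (n div q) / real n"
        using R[of n] n by (simp add: abs_divide divide_right_mono)
      ultimately show ?thesis by linarith
    qed
    then show "\<forall>\<^sub>F n in sequentially. norm (R n / real n) \<le> 2 * (Y (n div q) / real (Suc (n div q)))"
      unfolding eventually_sequentially by blast
    show "(\<lambda>n. 2 * (Y (n div q) / real (Suc (n div q)))) \<longlonglongrightarrow> 0"
      using tendsto_mult_right_zero[OF filterlim_compose[OF Y div]] by simp
  qed
  then have "(\<lambda>n. (real (n div q) / real n) * X (n div q) + R n / real n) \<longlonglongrightarrow> (1 / real q) * c + 0"
    by (intro tendsto_add tendsto_mult tendsto_div_nat_over_n q filterlim_compose[OF X div])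
  then show ?thesis by simp
qed

lemma interleaved_average_eq:
  fixes f :: "nat \<Rightarrow> 'a \<Rightarrow> real"
  shows "(\<Sum>i<n. f (i mod q) ((T ^^ (i div q)) x)) / real n
    = (real (n div q) / real n) * birkhoff_avg T (\<lambda>y. \<Sum>\<nu><q. f \<nu> y) (n div q) x
      + (\<Sum>\<nu><n mod q. f \<nu> ((T ^^ (n div q)) x)) / real n"
  unfolding sum_interleaved_eq_birkhoff_sum birkhoff_sum_eq_mult_avg by (simp add: add_divide_distrib)

lemma abs_interleaved_remainder_le:
  fixes f :: "nat \<Rightarrow> 'a \<Rightarrow> real"
  assumes "0 < q"
  shows "\<bar>\<Sum>\<nu><n mod q. f \<nu> y\<bar> \<le> (\<Sum>\<nu><q. \<bar>f \<nu> y\<bar>)"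
proof -
  have "\<bar>\<Sum>\<nu><n mod q. f \<nu> y\<bar> \<le> (\<Sum>\<nu><n mod q. \<bar>f \<nu> y\<bar>)"
    by (rule sum_abs)
  also have "\<dots> \<le> (\<Sum>\<nu><q. \<bar>f \<nu> y\<bar>)"
    using assms by (intro sum_mono2) auto
  finally show ?thesis .
qed

lemma tendsto_nn_integral_abs_if_integral:
  fixes h :: "nat \<Rightarrow> 'a \<Rightarrow> real"
  assumes "\<And>n. integrable M (h n)" and "(\<lambda>n. \<integral>x. \<bar>h n x\<bar> \<partial>M) \<longlonglongrightarrow> 0"
  shows "(\<lambda>n. \<integral>\<^sup>+x. ennreal \<bar>h n x\<bar> \<partial>M) \<longlonglongrightarrow> 0"
proof -
  have "(\<integral>\<^sup>+x. ennreal \<bar>h n x\<bar> \<partial>M) = ennreal (\<integral>x. \<bar>h n x\<bar> \<partial>M)" for n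
    using assms(1) by (intro nn_integral_eq_integral) auto
  then show ?thesis
    using tendsto_ennrealI[OF assms(2)] by simp
qed

lemma abs_interleaved_error_le:
  fixes r a c b :: real
  assumes "0 \<le> r"
  shows "\<bar>r * a + b / real n - c / real q\<bar> \<le> r * \<bar>a - c\<bar> + \<bar>r - 1 / real q\<bar> * \<bar>c\<bar> + \<bar>b\<bar> / real n"
proof -
  have "\<bar>r * a + b / real n - c / real q\<bar> = \<bar>r * (a - c) + (r - 1 / real q) * c + b / real n\<bar>"
    by (simp add: algebra_simps)
  also have "\<dots> \<le> \<bar>r * (a - c)\<bar> + \<bar>(r - 1 / real q) * c\<bar> + \<bar>b / real n\<bar>"
    by arith
  also have "\<dots> = r * \<bar>a - c\<bar> + \<bar>r - 1 / real q\<bar> * \<bar>c\<bar> + \<bar>b\<bar> / real n"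
    using assms by (simp add: abs_mult abs_divide)
  finally show ?thesis .
qed

context mpt
begin

lemma AE_cond_exp_invariant_sum:
  assumes "\<And>\<nu>. \<nu> < q \<Longrightarrow> integrable P (f \<nu>)"
  shows "AE x in P. real_cond_exp P (invariant_sigma P T) (\<lambda>y. \<Sum>\<nu><q. f \<nu> y) x
    = (\<Sum>\<nu><q. real_cond_exp P (invariant_sigma P T) (f \<nu>) x)"
proof -
  interpret S: sigma_finite_subalgebra P "invariant_sigma P T"
    by (rule sigma_finite_subalgebra_invariant)
  define f' where "f' \<nu> = (if \<nu> < q then f \<nu> else (\<lambda>_. 0))" for \<nu>
  have "AE x in P. real_cond_exp P (invariant_sigma P T) (\<lambda>y. \<Sum>\<nu><q. f' \<nu> y) x
      = (\<Sum>\<nu><q. real_cond_exp P (invariant_sigma P T) (f' \<nu>) x)"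
    using assms by (intro S.real_cond_exp_sum) (simp add: f'_def)
  moreover have "(\<lambda>y. \<Sum>\<nu><q. f' \<nu> y) = (\<lambda>y. \<Sum>\<nu><q. f \<nu> y)"
    by (simp add: f'_def)
  moreover have "(\<Sum>\<nu><q. real_cond_exp P (invariant_sigma P T) (f' \<nu>) x)
      = (\<Sum>\<nu><q. real_cond_exp P (invariant_sigma P T) (f \<nu>) x)" for x
    by (simp add: f'_def)
  ultimately show ?thesis by simp
qed


lemma tendsto_L1_interleaved_average:
  fixes X R :: "nat \<Rightarrow> 'a \<Rightarrow> real"
  assumes q: "0 < q" and X: "\<And>m. integrable P (X m)" and c: "integrable P c"
    and Xc: "(\<lambda>m. \<integral>x. \<bar>X m x - c x\<bar> \<partial>P) \<longlonglongrightarrow> 0"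
    and G: "integrable P G" and R: "\<And>n. integrable P (R n)"
    and R_le: "\<And>n x. \<bar>R n x\<bar> \<le> G ((T ^^ (n div q)) x)"
  shows "(\<lambda>n. \<integral>x. \<bar>(real (n div q) / real n) * X (n div q) x + R n x / real n - c x / real q\<bar> \<partial>P)
    \<longlonglongrightarrow> 0"
proof -
  define r where "r n = real (n div q) / real n" for n
  define B where "B n = r n * (\<integral>x. \<bar>X (n div q) x - c x\<bar> \<partial>P)
    + \<bar>r n - 1 / real q\<bar> * (\<integral>x. \<bar>c x\<bar> \<partial>P) + (\<integral>x. G x \<partial>P) / real n" for n
  have bound: "(\<integral>x. \<bar>r n * X (n div q) x + R n x / real n - c x / real q\<bar> \<partial>P) \<le> B n" for n
  proof -
    have "\<bar>r n * X (n div q) x + R n x / real n - c x / real q\<bar>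
        \<le> r n * \<bar>X (n div q) x - c x\<bar> + \<bar>r n - 1 / real q\<bar> * \<bar>c x\<bar> + G ((T ^^ (n div q)) x) / real n"
      for x
    proof -
      have "\<bar>R n x\<bar> / real n \<le> G ((T ^^ (n div q)) x) / real n"
        using R_le by (simp add: divide_right_mono)
      moreover have "0 \<le> r n" by (simp add: r_def)
      ultimately show ?thesis
        using abs_interleaved_error_le[where r="r n" and a="X (n div q) x" and c="c x" and b="R n x"
            and n=n and q=q] by linarith
    qed
    then have "(\<integral>x. \<bar>r n * X (n div q) x + R n x / real n - c x / real q\<bar> \<partial>P)
        \<le> (\<integral>x. r n * \<bar>X (n div q) x - c x\<bar> + \<bar>r n - 1 / real q\<bar> * \<bar>c x\<bar>
              + G ((T ^^ (n div q)) x) / real n \<partial>P)"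
      using X c G R by (intro integral_mono integrable_abs Bochner_Integration.integrable_diff
          Bochner_Integration.integrable_add integrable_mult_right integrable_divide
          integrable_comp_Tn) auto
    also have "\<dots> = B n"
    proof -
      have "integrable P (\<lambda>x. \<bar>X m x - c x\<bar>)" for m using X c by auto
      moreover have "integrable P (\<lambda>x. G ((T ^^ m) x))" for m by (rule integrable_comp_Tn[OF G])
      ultimately show ?thesis using c by (simp add: B_def integral_comp_Tn[OF G])
    qed
    finally show ?thesis .
  qed
  have r: "r \<longlonglongrightarrow> 1 / real q"
    unfolding r_def by (rule tendsto_div_nat_over_n[OF q])
  have Xc': "(\<lambda>n. \<integral>x. \<bar>X (n div q) x - c x\<bar> \<partial>P) \<longlonglongrightarrow> 0"
    by (rule filterlim_compose[OF Xc filterlim_div_nat_sequentially[OF q]])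
  have "B \<longlonglongrightarrow> 1 / real q * 0 + \<bar>1 / real q - 1 / real q\<bar> * (\<integral>x. \<bar>c x\<bar> \<partial>P) + 0"
    unfolding B_def
    by (intro tendsto_add[OF tendsto_add] tendsto_mult[OF r Xc'] lim_const_over_n
        tendsto_mult[OF tendsto_rabs[OF tendsto_diff[OF r tendsto_const]] tendsto_const])
  then have B: "B \<longlonglongrightarrow> 0" by simp
  show ?thesis
    unfolding r_def[symmetric]
  proof (rule Lim_null_comparison[OF always_eventually B], rule allI)
    fix n
    have "0 \<le> (\<integral>x. \<bar>r n * X (n div q) x + R n x / real n - c x / real q\<bar> \<partial>P)"
      by (rule integral_nonneg_AE) simp
    then show "norm (\<integral>x. \<bar>r n * X (n div q) x + R n x / real n - c x / real q\<bar> \<partial>P) \<le> B n"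
      using bound[of n] by simp
  qed
qed

text \<open>Birkhoff's theorem for \<open>q\<close> functions observed in turn, one step of \<open>T\<close> per round:
  each complete round contributes one term of the Birkhoff sum of \<open>\<Sum>\<nu><q. f \<nu>\<close>.\<close>
theorem interleaved_ergodic_theorem:
  fixes f :: "nat \<Rightarrow> 'a \<Rightarrow> real"
  assumes q: "0 < q" and f_int: "\<And>\<nu>. \<nu> < q \<Longrightarrow> integrable P (f \<nu>)"
  defines "A \<equiv> \<lambda>n x. (\<Sum>i<n. f (i mod q) ((T ^^ (i div q)) x)) / real n"
    and "L \<equiv> \<lambda>x. (\<Sum>\<nu><q. real_cond_exp P (invariant_sigma P T) (f \<nu>) x) / real q"
  shows "AE x in P. (\<lambda>n. A n x) \<longlonglongrightarrow> L x"
    and "(\<lambda>n. \<integral>\<^sup>+x. ennreal \<bar>A n x - L x\<bar> \<partial>P) \<longlonglongrightarrow> 0"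
proof -
  define g where "g x = (\<Sum>\<nu><q. f \<nu> x)" for x
  define G where "G x = (\<Sum>\<nu><q. \<bar>f \<nu> x\<bar>)" for x
  define E where "E = real_cond_exp P (invariant_sigma P T) g"
  define R where "R n x = (\<Sum>\<nu><n mod q. f \<nu> ((T ^^ (n div q)) x))" for n x
  have g: "integrable P g" unfolding g_def using f_int by auto
  have G: "integrable P G" unfolding G_def using f_int by auto
  have E: "integrable P E"
    unfolding E_def using sigma_finite_subalgebra.real_cond_exp_int(1)[OF sigma_finite_subalgebra_invariant g] .
  have R_le: "\<bar>R n x\<bar> \<le> G ((T ^^ (n div q)) x)" for n x
    unfolding R_def G_def by (rule abs_interleaved_remainder_le[OF q])
  have R: "integrable P (R n)" for n
  proof -
    have "\<nu> < q" if "\<nu> < n mod q" for \<nu> using that q by (meson mod_less_divisor order.strict_trans)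
    then show ?thesis
      unfolding R_def by (intro Bochner_Integration.integrable_sum integrable_comp_Tn f_int) auto
  qed
  have A_eq: "A n x = (real (n div q) / real n) * birkhoff_avg T g (n div q) x + R n x / real n" for n x
    unfolding A_def R_def g_def by (rule interleaved_average_eq)
  have "AE x in P. real_cond_exp P (invariant_sigma P T) (\<lambda>y. \<Sum>\<nu><q. f \<nu> y) x
      = (\<Sum>\<nu><q. real_cond_exp P (invariant_sigma P T) (f \<nu>) x)"
    by (rule AE_cond_exp_invariant_sum) (rule f_int)
  then have L_eq: "AE x in P. L x = E x / real q"
    unfolding L_def E_def g_def by eventually_elim simp
  show "AE x in P. (\<lambda>n. A n x) \<longlonglongrightarrow> L x"
    using birkhoff_ergodic_theorem(1)[OF g] AE_birkhoff_avg_convergent[OF G] L_eq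
  proof eventually_elim
    case (elim x)
    have "(\<lambda>n. (real (n div q) / real n) * birkhoff_avg T g (n div q) x + R n x / real n)
        \<longlonglongrightarrow> E x / real q"
      unfolding E_def by (rule tendsto_interleaved_average[OF q elim(1)
          tendsto_last_term_if_birkhoff_avg_convergent[OF elim(2)] R_le])
    then show ?case unfolding A_eq elim(3) .
  qed
  have "integrable P L"
    unfolding L_def using f_int
    by (intro integrable_divide Bochner_Integration.integrable_sum)
       (simp add: sigma_finite_subalgebra.real_cond_exp_int(1)[OF sigma_finite_subalgebra_invariant])
  then have AL: "integrable P (\<lambda>x. A n x - L x)" for n
    unfolding A_eq using g R
    by (intro Bochner_Integration.integrable_diff Bochner_Integration.integrable_add
        integrable_mult_right integrable_divide integrable_birkhoff_avg)
  have "(\<lambda>n. \<integral>x. \<bar>(real (n div q) / real n) * birkhoff_avg T g (n div q) x + R n x / real n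
      - E x / real q\<bar> \<partial>P) \<longlonglongrightarrow> 0"
    using g E G R R_le unfolding E_def
    by (intro tendsto_L1_interleaved_average[OF q] birkhoff_ergodic_theorem(2) integrable_birkhoff_avg)
  moreover have "(\<integral>x. \<bar>A n x - L x\<bar> \<partial>P) = (\<integral>x. \<bar>(real (n div q) / real n) * birkhoff_avg T g (n div q) x
      + R n x / real n - E x / real q\<bar> \<partial>P)" for n
  proof (rule integral_cong_AE)
    show "AE x in P. \<bar>A n x - L x\<bar> = \<bar>(real (n div q) / real n) * birkhoff_avg T g (n div q) x
        + R n x / real n - E x / real q\<bar>"
      using L_eq by eventually_elim (simp add: A_eq)
    have "integrable P (\<lambda>x. (real (n div q) / real n) * birkhoff_avg T g (n div q) x
        + R n x / real n - E x / real q)"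
      using g R E by (intro Bochner_Integration.integrable_diff Bochner_Integration.integrable_add
          integrable_mult_right integrable_divide integrable_birkhoff_avg)
    then show "(\<lambda>x. \<bar>(real (n div q) / real n) * birkhoff_avg T g (n div q) x
        + R n x / real n - E x / real q\<bar>) \<in> borel_measurable P"
      by auto
  qed (use AL in auto)
  ultimately show "(\<lambda>n. \<integral>\<^sup>+x. ennreal \<bar>A n x - L x\<bar> \<partial>P) \<longlonglongrightarrow> 0"
    by (intro tendsto_nn_integral_abs_if_integral[OF AL]) simp
qed

end

section \<open>Averages along periodic orbits\<close>

lemma action_birkhoff_sum_periodic:
  fixes \<theta> :: "'k::comm_monoid_add \<Rightarrow> 'w \<Rightarrow> 'w"
  assumes per: "(\<tau> ^^ q) t = t"
    and add: "\<And>k l \<omega>. k \<in> K \<Longrightarrow> l \<in> K \<Longrightarrow> \<omega> \<in> S \<Longrightarrow> \<theta> k (\<theta> l \<omega>) = \<theta> (k + l) \<omega>"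
    and closed: "\<And>k \<omega>. k \<in> K \<Longrightarrow> \<omega> \<in> S \<Longrightarrow> \<theta> k \<omega> \<in> S"
    and sums: "\<And>n. birkhoff_sum \<tau> \<kappa> n t \<in> K"
    and \<omega>: "\<omega> \<in> S"
  shows "\<theta> (birkhoff_sum \<tau> \<kappa> i t) \<omega>
    = \<theta> (birkhoff_sum \<tau> \<kappa> (i mod q) t) ((\<theta> (birkhoff_sum \<tau> \<kappa> q t) ^^ (i div q)) \<omega>)"
proof -
  define c where "c = birkhoff_sum \<tau> \<kappa> q t"
  have "\<theta> (birkhoff_sum \<tau> \<kappa> (q * j + \<nu>) t) \<omega> = \<theta> (birkhoff_sum \<tau> \<kappa> \<nu> t) ((\<theta> c ^^ j) \<omega>)"
    if "\<omega> \<in> S" for j \<nu> \<omega>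
    using that
  proof (induction j arbitrary: \<omega>)
    case (Suc j)
    have "birkhoff_sum \<tau> \<kappa> (q * Suc j + \<nu>) t = birkhoff_sum \<tau> \<kappa> (q * j + \<nu>) t + c"
      using birkhoff_sum_add[of \<tau> \<kappa> q "q * j + \<nu>" t] per by (simp add: c_def add_ac)
    then have "\<theta> (birkhoff_sum \<tau> \<kappa> (q * Suc j + \<nu>) t) \<omega> = \<theta> (birkhoff_sum \<tau> \<kappa> (q * j + \<nu>) t) (\<theta> c \<omega>)"
      using add[OF sums sums Suc.prems] by (simp add: c_def)
    also have "\<dots> = \<theta> (birkhoff_sum \<tau> \<kappa> \<nu> t) ((\<theta> c ^^ Suc j) \<omega>)"
      using Suc.IH[OF closed[OF sums Suc.prems]] by (simp add: c_def funpow_Suc_right del: funpow.simps)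
    finally show ?case .
  qed simp
  from this[OF \<omega>, of "i div q" "i mod q"] show ?thesis by (simp add: c_def)
qed

lemma ergodic_averages_along_periodic_orbit:
  fixes \<theta> :: "'k::comm_monoid_add \<Rightarrow> 'w \<Rightarrow> 'w" and F :: "'m \<times> 'w \<Rightarrow> real"
  assumes P: "prob_space P"
    and \<theta>_mp: "\<And>k. k \<in> K \<Longrightarrow> meas_preserving P (\<theta> k)"
    and \<theta>_add: "\<And>k l \<omega>. k \<in> K \<Longrightarrow> l \<in> K \<Longrightarrow> \<omega> \<in> space P \<Longrightarrow> \<theta> k (\<theta> l \<omega>) = \<theta> (k + l) \<omega>"
    and sums: "\<And>n. birkhoff_sum \<tau> \<kappa> n t \<in> K"
    and q: "0 < q" and per: "(\<tau> ^^ q) t = t"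
    and F_int: "\<And>\<nu>. \<nu> < q \<Longrightarrow> integrable P (\<lambda>\<omega>. F ((\<tau> ^^ \<nu>) t, \<omega>))"
  defines "A \<equiv> \<lambda>n \<omega>. (\<Sum>i<n. F ((\<tau> ^^ i) t, \<theta> (birkhoff_sum \<tau> \<kappa> i t) \<omega>)) / real n"
    and "L \<equiv> \<lambda>\<omega>. (\<Sum>\<nu><q. real_cond_exp P (invariant_sigma P (\<theta> (birkhoff_sum \<tau> \<kappa> q t)))
                 (\<lambda>\<omega>'. F ((\<tau> ^^ \<nu>) t, \<theta> (birkhoff_sum \<tau> \<kappa> \<nu> t) \<omega>')) \<omega>) / real q"
  shows "AE \<omega> in P. (\<lambda>n. A n \<omega>) \<longlonglongrightarrow> L \<omega>"
    and "(\<lambda>n. \<integral>\<^sup>+\<omega>. ennreal \<bar>A n \<omega> - L \<omega>\<bar> \<partial>P) \<longlonglongrightarrow> 0"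
    and "ergodic P (\<theta> (birkhoff_sum \<tau> \<kappa> q t)) \<Longrightarrow>
      AE \<omega> in P. L \<omega> = (\<Sum>\<nu><q. \<integral>\<omega>'. F ((\<tau> ^^ \<nu>) t, \<omega>') \<partial>P) / real q"
proof -
  have mpt: "mpt P (\<theta> (birkhoff_sum \<tau> \<kappa> n t))" for n
    using P \<theta>_mp[OF sums] by (simp add: mpt_def mpt_axioms_def)
  define T where "T = \<theta> (birkhoff_sum \<tau> \<kappa> q t)"
  interpret mpt P T unfolding T_def by (rule mpt)
  define f where "f \<nu> \<omega> = F ((\<tau> ^^ \<nu>) t, \<theta> (birkhoff_sum \<tau> \<kappa> \<nu> t) \<omega>)" for \<nu> \<omega>
  have f_int: "integrable P (f \<nu>)" if "\<nu> < q" for \<nu>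
    unfolding f_def by (rule mpt.integrable_comp_T[OF mpt F_int[OF that]])
  have A_eq: "A n \<omega> = (\<Sum>i<n. f (i mod q) ((T ^^ (i div q)) \<omega>)) / real n" if "\<omega> \<in> space P" for n \<omega>
  proof -
    have "\<theta> k \<omega> \<in> space P" if "k \<in> K" "\<omega> \<in> space P" for k \<omega>
      using \<theta>_mp[OF that(1)] that(2) by (auto simp: meas_preserving_def measurable_space)
    then have "\<theta> (birkhoff_sum \<tau> \<kappa> i t) \<omega>
        = \<theta> (birkhoff_sum \<tau> \<kappa> (i mod q) t) ((T ^^ (i div q)) \<omega>)" for i
      unfolding T_def using action_birkhoff_sum_periodic[OF per \<theta>_add _ sums \<open>\<omega> \<in> space P\<close>] by blast
    then show ?thesis
      unfolding A_def f_def using per by (simp add: funpow_mod_eq)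
  qed
  have L_eq: "L = (\<lambda>\<omega>. (\<Sum>\<nu><q. real_cond_exp P (invariant_sigma P T) (f \<nu>) \<omega>) / real q)"
    unfolding L_def f_def T_def ..
  have "AE \<omega> in P. (\<lambda>n. (\<Sum>i<n. f (i mod q) ((T ^^ (i div q)) \<omega>)) / real n)
      \<longlonglongrightarrow> (\<Sum>\<nu><q. real_cond_exp P (invariant_sigma P T) (f \<nu>) \<omega>) / real q"
    by (rule interleaved_ergodic_theorem(1)[OF q]) (rule f_int)
  with AE_space show "AE \<omega> in P. (\<lambda>n. A n \<omega>) \<longlonglongrightarrow> L \<omega>"
    by eventually_elim (simp add: A_eq L_eq)
  have "(\<lambda>n. \<integral>\<^sup>+\<omega>. ennreal \<bar>(\<Sum>i<n. f (i mod q) ((T ^^ (i div q)) \<omega>)) / real n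
      - (\<Sum>\<nu><q. real_cond_exp P (invariant_sigma P T) (f \<nu>) \<omega>) / real q\<bar> \<partial>P) \<longlonglongrightarrow> 0"
    by (rule interleaved_ergodic_theorem(2)[OF q]) (rule f_int)
  moreover have "(\<integral>\<^sup>+\<omega>. ennreal \<bar>A n \<omega> - L \<omega>\<bar> \<partial>P)
      = (\<integral>\<^sup>+\<omega>. ennreal \<bar>(\<Sum>i<n. f (i mod q) ((T ^^ (i div q)) \<omega>)) / real n
      - (\<Sum>\<nu><q. real_cond_exp P (invariant_sigma P T) (f \<nu>) \<omega>) / real q\<bar> \<partial>P)" for n
    by (intro nn_integral_cong) (simp add: A_eq L_eq)
  ultimately show "(\<lambda>n. \<integral>\<^sup>+\<omega>. ennreal \<bar>A n \<omega> - L \<omega>\<bar> \<partial>P) \<longlonglongrightarrow> 0"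
    by simp
  show "AE \<omega> in P. L \<omega> = (\<Sum>\<nu><q. \<integral>\<omega>'. F ((\<tau> ^^ \<nu>) t, \<omega>') \<partial>P) / real q"
    if "ergodic P (\<theta> (birkhoff_sum \<tau> \<kappa> q t))"
  proof -
    have "AE \<omega> in P. \<forall>\<nu><q. real_cond_exp P (invariant_sigma P T) (f \<nu>) \<omega> = (\<integral>\<omega>'. f \<nu> \<omega>' \<partial>P)"
      using that f_int unfolding T_def[symmetric] AE_all_countable
      by (auto intro: AE_cond_exp_invariant_ergodic)
    moreover have "(\<Sum>\<nu><q. \<integral>\<omega>'. f \<nu> \<omega>' \<partial>P) = (\<Sum>\<nu><q. \<integral>\<omega>'. F ((\<tau> ^^ \<nu>) t, \<omega>') \<partial>P)"
      unfolding f_def by (intro sum.cong refl mpt.integral_comp_T[OF mpt F_int]) simp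
    ultimately show ?thesis
      unfolding L_eq by (elim AE_mp) (auto intro!: AE_I2 sum.cong)
  qed
qed

lemma (in mpt) AE_integrable_sections_along_orbit:
  fixes F :: "'a \<times> 'b \<Rightarrow> real"
  assumes Q: "sigma_finite_measure Q" and F: "integrable (P \<Otimes>\<^sub>M Q) F"
  shows "AE t in P. \<forall>n. integrable Q (\<lambda>\<omega>. F ((T ^^ n) t, \<omega>))"
proof -
  interpret pair_sigma_finite P Q
    using Q prob_space_imp_sigma_finite[OF prob_space_axioms] by (simp add: pair_sigma_finite_def)
  show ?thesis
    unfolding AE_all_countable using AE_comp_Tn[OF AE_integrable_fst'[OF F]] by blast
qed

lemma birkhoff_sum_in_submonoid:
  assumes "0 \<in> K" "\<And>k l. k \<in> K \<Longrightarrow> l \<in> K \<Longrightarrow> k + l \<in> K" "\<And>i. f ((T ^^ i) x) \<in> K"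
  shows "birkhoff_sum T f n x \<in> K"
  using assms by (induction n) (simp_all add: birkhoff_sum_def)

theorem corollary3p3:
  fixes P :: "'w measure" and \<mu> :: "'m measure"
    and K :: "(int ^ 'd) set"
    and \<theta> :: "int ^ 'd \<Rightarrow> 'w \<Rightarrow> 'w"
    and \<tau> :: "'m \<Rightarrow> 'm" and q :: nat
    and \<kappa> :: "'m \<Rightarrow> int ^ 'd"
    and F :: "'m \<times> 'w \<Rightarrow> real"
  defines "\<kappa>s \<equiv> (\<lambda>n t. \<Sum>i<n. \<kappa> ((\<tau> ^^ i) t))"
  defines "L \<equiv> (\<lambda>t \<omega>. (1 / real q) * (\<Sum>\<nu><q.
              real_cond_exp P (invariant_sigma P (\<theta> (\<kappa>s q t)))
                 (\<lambda>\<omega>'. F ((\<tau> ^^ \<nu>) t, \<theta> (\<kappa>s \<nu> t) \<omega>')) \<omega>))"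
  defines "A \<equiv> (\<lambda>t n \<omega>. (1 / real n) * (\<Sum>i<n. F ((\<tau> ^^ i) t, \<theta> (\<kappa>s i t) \<omega>)))"
  assumes K: "K = {k. \<forall>i. 0 \<le> k $ i} \<or> K = UNIV"
    and P: "prob_space P"
    and \<theta>_mp: "\<And>k. k \<in> K \<Longrightarrow> meas_preserving P (\<theta> k)"
    and \<theta>_0: "\<And>\<omega>. \<omega> \<in> space P \<Longrightarrow> \<theta> 0 \<omega> = \<omega>"
    and \<theta>_add: "\<And>k l \<omega>. k \<in> K \<Longrightarrow> l \<in> K \<Longrightarrow> \<omega> \<in> space P \<Longrightarrow>
                   \<theta> k (\<theta> l \<omega>) = \<theta> (k + l) \<omega>"
    and \<mu>: "prob_space \<mu>"
    and \<tau>_mp: "meas_preserving \<mu> \<tau>"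
    and q: "q \<ge> 1"
    and \<tau>_per: "\<And>t. t \<in> space \<mu> \<Longrightarrow> (\<tau> ^^ q) t = t"
    and \<kappa>_meas: "\<kappa> \<in> \<mu> \<rightarrow>\<^sub>M count_space UNIV"
    and \<kappa>_K: "\<And>t. t \<in> space \<mu> \<Longrightarrow> \<kappa> t \<in> K"
    and F: "integrable (\<mu> \<Otimes>\<^sub>M P) F"
  shows "(AE t in \<mu>. (AE \<omega> in P. (\<lambda>n. A t n \<omega>) \<longlonglongrightarrow> L t \<omega>)
                   \<and> (\<lambda>n. \<integral>\<^sup>+ \<omega>. ennreal \<bar>A t n \<omega> - L t \<omega>\<bar> \<partial>P) \<longlonglongrightarrow> 0)
       \<and> ((AE t in \<mu>. ergodic P (\<theta> (\<kappa>s q t))) \<longrightarrow>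
          (AE t in \<mu>. AE \<omega> in P.
             L t \<omega> = (1 / real q) * (\<Sum>\<nu><q. \<integral> \<omega>'. F ((\<tau> ^^ \<nu>) t, \<omega>') \<partial>P)))"
proof -
  interpret mpt \<mu> \<tau> using \<mu> \<tau>_mp by (simp add: mpt_def mpt_axioms_def)
  have \<kappa>s: "\<kappa>s = birkhoff_sum \<tau> \<kappa>" by (simp add: \<kappa>s_def birkhoff_sum_def fun_eq_iff)
  have sums: "birkhoff_sum \<tau> \<kappa> n t \<in> K" if "t \<in> space \<mu>" for n t
    using K \<kappa>_K measurable_space[OF Tn_measurable] that by (intro birkhoff_sum_in_submonoid) auto
  note along_orbit = ergodic_averages_along_periodic_orbit[OF P \<theta>_mp \<theta>_add sums _ \<tau>_per]
  have "AE t in \<mu>. t \<in> space \<mu> \<and> (\<forall>n. integrable P (\<lambda>\<omega>. F ((\<tau> ^^ n) t, \<omega>)))"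
    using AE_space AE_integrable_sections_along_orbit[OF prob_space_imp_sigma_finite[OF P] F]
    by eventually_elim simp
  then show ?thesis
    using q along_orbit unfolding A_def L_def \<kappa>s by (auto elim!: AE_mp simp: mult.commute[of "1 / _"])
qed

end
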